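(* Let $\lambda>1$ and $n\ge1$. Then $\Theta_\lambda^*$ maps $V_{n,\lambda-1}$ into $V_{n-1,\lambda+1}$ and maps $V_{n,\lambda-1}^\perp$ into $V_{n-1,\lambda+1}^\perp$, where $\Theta_\lambda^*:\mathcal H^{(\lambda-1)}\otimes H^2\to\mathcal H^{(\lambda+1)}\otimes H^2$ is given by $$(\Theta_\lambda^*f)(z,w)=\frac1{\sqrt{\lambda(\lambda-1)}}\frac{\partial f}{\partial w}(z,w)-\sqrt{\frac{\lambda-1}{\lambda}}\,\frac{f(z,w)-f(w,w)}{z-w},\qquad z,w\in\mathbb D.$$
   Context: For $\lambda>0$, $\mathcal H^{(\lambda)}$ is the Hilbert space of holomorphic functions on $\mathbb D$ with reproducing kernel $(1-z\bar w)^{-\lambda}$, and $H^2$ the Hardy space. $\mathcal H^{(\lambda)}\otimes H^2$ is identified with a Hilbert space of holomorphic functions on $\mathbb D^2$ via $f\otimes g\mapsto((z,w)\mapsto g(z)f(w))$. Let $\triangle=\{(z,z):z\in\mathbb D\}$. For $k\ge0$, $V_{k,\lambda}$ is the orthogonal complement in $\mathcal H^{(\lambda)}\otimes H^2$ of the set of all its elements vanishing to order $\ge k$ on $\triangle$ (all partial derivatives of order $<k$ vanish on $\triangle$); $V_{k,\lambda}^\perp$ is its orthogonal complement. The displayed operator is the adjoint of the characteristic operator of multiplication by $z$ on $\mathcal H^{(\lambda)}$. *)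

theory Defs
  imports "HOL-Analysis.Analysis"
begin

text \<open>Functions on the bidisc are modelled as maps complex \<times> complex \<Rightarrow> complex;
  only their values on the open bidisc matter.  The first coordinate z is the
  Hardy-space variable, the second coordinate w is the H^(lambda) variable.\<close>

text \<open>Norm square of the monomial w^n in H^(lambda) (kernel (1 - z conj w) powr -lambda):
  n! / (lambda)_n.\<close>
definition wt :: "real \<Rightarrow> nat \<Rightarrow> real" where
  "wt lam n = fact n / pochhammer lam n"

definition has_expansion :: "(nat \<times> nat \<Rightarrow> complex) \<Rightarrow> (complex \<times> complex \<Rightarrow> complex) \<Rightarrow> bool" where
  "has_expansion a f \<longleftrightarrow>
     (\<forall>z w. norm z < 1 \<and> norm w < 1 \<longrightarrow>
        ((\<lambda>(m,n). a (m,n) * z ^ m * w ^ n) has_sum f (z,w)) UNIV)"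

text \<open>The Hilbert space H^(lambda) tensor H^2, as a set of functions on the bidisc.\<close>
definition Hsp :: "real \<Rightarrow> (complex \<times> complex \<Rightarrow> complex) set" where
  "Hsp lam = {f. \<exists>a. has_expansion a f \<and>
                   (\<lambda>(m,n). (norm (a (m,n)))\<^sup>2 * wt lam n) summable_on UNIV}"

definition coeffs :: "(complex \<times> complex \<Rightarrow> complex) \<Rightarrow> nat \<times> nat \<Rightarrow> complex" where
  "coeffs f = (SOME a. has_expansion a f)"

definition inner_H :: "real \<Rightarrow> (complex \<times> complex \<Rightarrow> complex) \<Rightarrow> (complex \<times> complex \<Rightarrow> complex) \<Rightarrow> complex" where
  "inner_H lam f g = infsum (\<lambda>(m,n). coeffs f (m,n) * cnj (coeffs g (m,n)) * of_real (wt lam n)) UNIV"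

definition dz :: "(complex \<times> complex \<Rightarrow> complex) \<Rightarrow> complex \<times> complex \<Rightarrow> complex" where
  "dz f = (\<lambda>(z,w). deriv (\<lambda>x. f (x,w)) z)"

definition dw :: "(complex \<times> complex \<Rightarrow> complex) \<Rightarrow> complex \<times> complex \<Rightarrow> complex" where
  "dw f = (\<lambda>(z,w). deriv (\<lambda>y. f (z,y)) w)"

definition vanishes_to_order :: "nat \<Rightarrow> (complex \<times> complex \<Rightarrow> complex) \<Rightarrow> bool" where
  "vanishes_to_order k f \<longleftrightarrow>
     (\<forall>i j. i + j < k \<longrightarrow> (\<forall>z. norm z < 1 \<longrightarrow> (dz ^^ i) ((dw ^^ j) f) (z,z) = 0))"

definition Vsp :: "nat \<Rightarrow> real \<Rightarrow> (complex \<times> complex \<Rightarrow> complex) set" where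
  "Vsp k lam = {g \<in> Hsp lam. \<forall>f \<in> Hsp lam. vanishes_to_order k f \<longrightarrow> inner_H lam g f = 0}"

definition Vperp :: "nat \<Rightarrow> real \<Rightarrow> (complex \<times> complex \<Rightarrow> complex) set" where
  "Vperp k lam = {h \<in> Hsp lam. \<forall>g \<in> Vsp k lam. inner_H lam h g = 0}"

text \<open>The operator Theta_lambda^*; on the diagonal the difference quotient is
  replaced by its limit, the z-derivative.\<close>
definition Theta :: "real \<Rightarrow> (complex \<times> complex \<Rightarrow> complex) \<Rightarrow> complex \<times> complex \<Rightarrow> complex" where
  "Theta lam f = (\<lambda>(z,w).
     of_real (1 / sqrt (lam * (lam - 1))) * dw f (z,w)
     - of_real (sqrt ((lam - 1) / lam)) *
         (if z = w then dz f (w,w) else (f (z,w) - f (w,w)) / (z - w)))"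

end

theory Submission
  imports Defs "HOL-Computational_Algebra.Polynomial"
begin

text \<open>Everything happens on the Taylor coefficients \<open>a (m, k)\<close> of \<open>z^m w^k\<close>. The coefficients of
  \<open>Theta f\<close> on the antidiagonal \<open>m + k = N\<close> depend only on those of \<open>f\<close> on \<open>m + k = N + 1\<close>,
  and on each antidiagonal \<open>Theta\<close> is isometric from the \<open>H^(\<lambda>-1)\<close> weights to the \<open>H^(\<lambda>+1)\<close>
  weights up to a defect proportional to \<open>|\<Sum>k. a (N + 1 - k, k)|\<^sup>2\<close>; these antidiagonal sums
  are the Taylor coefficients of \<open>f (z, z)\<close>. So \<open>Theta\<close> maps the functions vanishing on the
  diagonal isometrically onto \<open>H^(\<lambda>+1) \<otimes> H^2\<close>. Vanishing to order \<open>n\<close> on the diagonal means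
  that the binomial moments \<open>\<Sum>k. a (N - k, k) (k choose p)\<close>, \<open>p < n\<close>, vanish on every
  antidiagonal, and \<open>Theta\<close> shifts these moments down by one order. Both inclusions follow by
  pulling test functions back through \<open>Theta\<close>.\<close>

section \<open>The action of Theta on one antidiagonal\<close>

definition theta_alpha :: "real \<Rightarrow> real" where
  "theta_alpha L = 1 / sqrt (L * (L - 1))"

definition theta_beta :: "real \<Rightarrow> real" where
  "theta_beta L = sqrt ((L - 1) / L)"

definition antidiag :: "(nat \<times> nat \<Rightarrow> 'a) \<Rightarrow> nat \<Rightarrow> nat \<Rightarrow> 'a" where
  "antidiag a N k = a (N - k, k)"

definition theta_slice :: "real \<Rightarrow> (nat \<Rightarrow> complex) \<Rightarrow> nat \<Rightarrow> complex" where
  "theta_slice L x j =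
     of_real (theta_alpha L) * of_nat (Suc j) * x (Suc j) - of_real (theta_beta L) * (\<Sum>k\<le>j. x k)"

text \<open>In \<open>Theta L f\<close> the term \<open>dw f\<close> contributes \<open>(j + 1) a (i, j + 1)\<close> to the coefficient of
  \<open>z^i w^j\<close>, and the difference quotient contributes \<open>\<Sum>k\<le>j. a (i + j + 1 - k, k)\<close>.\<close>
definition theta_coeffs :: "real \<Rightarrow> (nat \<times> nat \<Rightarrow> complex) \<Rightarrow> nat \<times> nat \<Rightarrow> complex" where
  "theta_coeffs L a = (\<lambda>(i,j). theta_slice L (antidiag a (Suc (i + j))) j)"

lemma antidiag_theta_coeffs:
  "j \<le> M \<Longrightarrow> antidiag (theta_coeffs L a) M j = theta_slice L (antidiag a (Suc M)) j"
  by (simp add: antidiag_def theta_coeffs_def)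

lemma theta_alpha_pos: "L > 1 \<Longrightarrow> theta_alpha L > 0"
  by (simp add: theta_alpha_def)

lemma theta_beta_pos: "L > 1 \<Longrightarrow> theta_beta L > 0"
  by (simp add: theta_beta_def)

lemma theta_alpha_Suc_plus_beta_nonzero:
  assumes "L > 1"
  shows "of_real (theta_alpha L) * of_nat (Suc q) + of_real (theta_beta L) \<noteq> (0 :: complex)"
proof -
  have "theta_alpha L * of_nat (Suc q) + theta_beta L > 0"
    using theta_alpha_pos[OF assms] theta_beta_pos[OF assms] by (simp add: add_pos_pos)
  then show ?thesis by (metis of_real_add of_real_eq_0_iff of_real_mult of_real_of_nat_eq less_irrefl)
qed

lemma theta_alpha_beta:
  assumes "L > 1"
  shows "theta_alpha L * theta_beta L = 1 / L"
    and "(theta_alpha L)\<^sup>2 = 1 / (L * (L - 1))"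
    and "(theta_beta L)\<^sup>2 = (L - 1) / L"
proof -
  have pos: "L * (L - 1) > 0" "(L - 1) / L > 0" using assms by auto
  show "(theta_alpha L)\<^sup>2 = 1 / (L * (L - 1))" using pos by (simp add: theta_alpha_def power_divide)
  show "(theta_beta L)\<^sup>2 = (L - 1) / L" using pos by (simp add: theta_beta_def)
  have "theta_alpha L * theta_beta L = sqrt (1 / (L * L))"
    using pos assms by (simp add: theta_alpha_def theta_beta_def real_sqrt_divide real_sqrt_mult)
  also have "\<dots> = 1 / L" using assms by (simp add: real_sqrt_divide)
  finally show "theta_alpha L * theta_beta L = 1 / L" .
qed

lemma wt_recurrences:
  assumes "L > 1"
  shows "(theta_beta L)\<^sup>2 * wt (L + 1) N = wt L N - wt L (Suc N)"
    and "(theta_alpha L)\<^sup>2 * (of_nat (Suc N))\<^sup>2 * wt (L + 1) N + wt L (Suc N) = wt (L - 1) (Suc N)"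
    and "theta_alpha L * theta_beta L * of_nat (Suc N) * wt (L + 1) N = wt L (Suc N)"
proof -
  define P where "P = pochhammer (L + 1) N"
  have P: "P > 0" unfolding P_def using assms by (intro pochhammer_pos) auto
  have LN: "L + of_nat N > 0" using assms by simp
  have "pochhammer L (Suc N) = L * P" unfolding P_def by (simp add: pochhammer_rec)
  moreover have "pochhammer L (Suc N) = pochhammer L N * (L + of_nat N)" by (simp add: pochhammer_rec')
  ultimately have PL: "pochhammer L N = L * P / (L + of_nat N)" using LN by (simp add: field_simps)
  have PL1: "pochhammer (L - 1) (Suc N) = (L - 1) * pochhammer L N" by (simp add: pochhammer_rec)
  have w1: "wt (L + 1) N = fact N / P" by (simp add: wt_def P_def)
  have w0: "wt L N = fact N * (L + of_nat N) / (L * P)" using LN assms P by (simp add: wt_def PL)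
  have w2: "wt L (Suc N) = (of_nat N + 1) * fact N / (L * P)"
    by (simp add: wt_def pochhammer_rec P_def)
  have w3: "wt (L - 1) (Suc N) = (of_nat N + 1) * fact N * (L + of_nat N) / ((L - 1) * L * P)"
    using LN assms P unfolding wt_def PL1 PL fact_Suc by (simp add: field_simps)
  note ab = theta_alpha_beta[OF assms]
  show "(theta_beta L)\<^sup>2 * wt (L + 1) N = wt L N - wt L (Suc N)"
    unfolding w0 w1 w2 ab using assms P by (simp add: field_simps)
  show "(theta_alpha L)\<^sup>2 * (of_nat (Suc N))\<^sup>2 * wt (L + 1) N + wt L (Suc N) = wt (L - 1) (Suc N)"
    unfolding w1 w2 w3 ab using assms P by (simp add: field_simps power2_eq_square)
  show "theta_alpha L * theta_beta L * of_nat (Suc N) * wt (L + 1) N = wt L (Suc N)"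
    unfolding w1 w2 ab using assms P by (simp add: field_simps)
qed

lemma theta_slice_inner_identity:
  assumes "L > 1"
  shows "(\<Sum>j<N. theta_slice L x j * cnj (theta_slice L y j) * of_real (wt (L + 1) j))
           + of_real (wt L N) * (\<Sum>k\<le>N. x k) * cnj (\<Sum>k\<le>N. y k)
         = (\<Sum>k\<le>N. x k * cnj (y k) * of_real (wt (L - 1) k))"
proof (induction N)
  case 0
  then show ?case by (simp add: wt_def)
next
  case (Suc N)
  define X Y where "X = (\<Sum>k\<le>N. x k)" and "Y = (\<Sum>k\<le>N. y k)"
  define a b n p where "a = theta_alpha L" and "b = theta_beta L"
    and "n = (of_nat (Suc N) :: real)" and "p = wt (L + 1) N"
  note w = wt_recurrences[OF assms, of N, folded a_def b_def n_def p_def]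
  have w_Suc: "wt L (Suc N) = a * b * n * p" using w(3) by simp
  have w_pred: "wt (L - 1) (Suc N) = a\<^sup>2 * n\<^sup>2 * p + a * b * n * p" using w(2) w_Suc by simp
  have w_N: "wt L N = b\<^sup>2 * p + a * b * n * p" using w(1) w_Suc by simp
  have step: "theta_slice L x N * cnj (theta_slice L y N) * of_real p
          + of_real (wt L (Suc N)) * (X + x (Suc N)) * cnj (Y + y (Suc N))
          - of_real (wt L N) * X * cnj Y
        = x (Suc N) * cnj (y (Suc N)) * of_real (wt (L - 1) (Suc N))"
    unfolding theta_slice_def w_Suc w_pred w_N
    by (simp add: X_def Y_def a_def b_def n_def algebra_simps power2_eq_square)
  have "(\<Sum>j<Suc N. theta_slice L x j * cnj (theta_slice L y j) * of_real (wt (L + 1) j))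
          + of_real (wt L (Suc N)) * (\<Sum>k\<le>Suc N. x k) * cnj (\<Sum>k\<le>Suc N. y k)
        = ((\<Sum>j<N. theta_slice L x j * cnj (theta_slice L y j) * of_real (wt (L + 1) j))
            + of_real (wt L N) * X * cnj Y)
          + (theta_slice L x N * cnj (theta_slice L y N) * of_real p
            + of_real (wt L (Suc N)) * (X + x (Suc N)) * cnj (Y + y (Suc N))
            - of_real (wt L N) * X * cnj Y)"
    by (simp add: X_def Y_def p_def)
  then show ?case
    unfolding Suc.IH[folded X_def Y_def] step by (simp add: X_def Y_def)
qed

lemma theta_slice_norm_identity:
  assumes "L > 1"
  shows "(\<Sum>j<N. (norm (theta_slice L x j))\<^sup>2 * wt (L + 1) j) + wt L N * (norm (\<Sum>k\<le>N. x k))\<^sup>2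
         = (\<Sum>k\<le>N. (norm (x k))\<^sup>2 * wt (L - 1) k)"
proof -
  have "of_real ((norm z)\<^sup>2 * r) = z * cnj z * of_real r" for z r
    by (simp only: of_real_mult complex_norm_square)
  moreover have "of_real (r * (norm z)\<^sup>2) = of_real r * z * cnj z" for z r
    by (simp only: of_real_mult complex_norm_square mult.assoc)
  ultimately have "complex_of_real ((\<Sum>j<N. (norm (theta_slice L x j))\<^sup>2 * wt (L + 1) j)
                     + wt L N * (norm (\<Sum>k\<le>N. x k))\<^sup>2)
                 = of_real (\<Sum>k\<le>N. (norm (x k))\<^sup>2 * wt (L - 1) k)"
    unfolding of_real_add of_real_sum
    by (simp only: theta_slice_inner_identity[OF assms, where N=N and x=x and y=x])
  then show ?thesis by (simp only: of_real_eq_iff)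
qed

lemma theta_slice_cong: "(\<And>k. k \<le> Suc j \<Longrightarrow> x k = y k) \<Longrightarrow> theta_slice L x j = theta_slice L y j"
  by (simp add: theta_slice_def)

text \<open>The partial sums of \<open>x\<close> satisfy a first order recursion driven by \<open>c\<close>; solving it
  backwards from the prescribed total \<open>t\<close> gives \<open>x\<close>.\<close>
lemma theta_slice_solvable:
  assumes "L > 1"
  shows "\<exists>x. (\<forall>j<M. theta_slice L x j = c j) \<and> (\<Sum>k\<le>M. x k) = t"
proof (induction M arbitrary: t)
  case 0
  show ?case by (rule exI[of _ "\<lambda>_. t"]) simp
next
  case (Suc M)
  define r :: complex where "r = of_real (theta_alpha L) * of_nat (Suc M)"
  define b :: complex where "b = of_real (theta_beta L)"
  have rb: "r + b \<noteq> 0"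
    unfolding r_def b_def by (rule theta_alpha_Suc_plus_beta_nonzero[OF assms])
  define t' where "t' = (r * t - c M) / (r + b)"
  obtain x where x: "\<forall>j<M. theta_slice L x j = c j" "(\<Sum>k\<le>M. x k) = t'"
    using Suc.IH by blast
  define x' where "x' = x(Suc M := t - t')"
  have "theta_slice L x' j = c j" if "j < Suc M" for j
  proof (cases "j < M")
    case True
    then have "theta_slice L x' j = theta_slice L x j" by (intro theta_slice_cong) (simp add: x'_def)
    then show ?thesis using x(1) True by simp
  next
    case False
    then have j: "j = M" using that by simp
    have "(\<Sum>k\<le>M. x' k) = t'" using x(2) by (simp add: x'_def)
    then have "theta_slice L x' j = r * (t - t') - b * t'"
      by (simp add: theta_slice_def j r_def b_def x'_def)
    also have "\<dots> = r * t - (r + b) * t'" by (simp add: algebra_simps)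
    also have "\<dots> = c j" using rb by (simp add: t'_def j)
    finally show ?thesis .
  qed
  moreover have "(\<Sum>k\<le>Suc M. x' k) = t" using x(2) by (simp add: x'_def)
  ultimately show ?case by blast
qed

lemma sum_binomial_times_partial_sums:
  fixes x :: "nat \<Rightarrow> 'a::comm_ring_1"
  shows "(\<Sum>j\<le>M. of_nat (j choose p) * (\<Sum>k\<le>j. x k))
       = of_nat (Suc M choose Suc p) * (\<Sum>k\<le>Suc M. x k) - (\<Sum>k\<le>Suc M. of_nat (k choose Suc p) * x k)"
proof (induction M)
  case 0
  then show ?case by (cases p) (auto simp: algebra_simps)
next
  case (Suc M)
  have "(of_nat (Suc (Suc M) choose Suc p) :: 'a) = of_nat (Suc M choose Suc p) + of_nat (Suc M choose p)"
    by simp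
  then show ?case
    unfolding sum.atMost_Suc[of _ "Suc M"] sum.atMost_Suc[of "\<lambda>j. of_nat (j choose p) * _ j" M] Suc.IH
    by (simp add: algebra_simps)
qed

lemma theta_slice_binomial_moment:
  "(\<Sum>j\<le>M. theta_slice L x j * of_nat (j choose p))
     = (of_real (theta_alpha L) * of_nat (Suc p) + of_real (theta_beta L))
         * (\<Sum>k\<le>Suc M. x k * of_nat (k choose Suc p))
       - of_real (theta_beta L) * of_nat (Suc M choose Suc p) * (\<Sum>k\<le>Suc M. x k)"
proof -
  have "(\<Sum>j\<le>M. of_nat (Suc j) * x (Suc j) * of_nat (j choose p))
      = (\<Sum>j\<le>M. of_nat (Suc p) * (x (Suc j) * of_nat (Suc j choose Suc p)) :: complex)"
  proof (intro sum.cong refl)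
    fix j
    have "(of_nat (Suc j) :: complex) * of_nat (j choose p) = of_nat (Suc j choose Suc p) * of_nat (Suc p)"
      by (metis Suc_times_binomial_eq of_nat_mult)
    then show "of_nat (Suc j) * x (Suc j) * of_nat (j choose p)
        = of_nat (Suc p) * (x (Suc j) * of_nat (Suc j choose Suc p))"
      by (simp add: mult_ac)
  qed
  also have "\<dots> = of_nat (Suc p) * (\<Sum>k\<le>Suc M. x k * of_nat (k choose Suc p))"
    unfolding sum_distrib_left[symmetric] sum.atMost_Suc_shift by simp
  finally have derivative_part:
    "(\<Sum>j\<le>M. of_nat (Suc j) * x (Suc j) * of_nat (j choose p))
       = of_nat (Suc p) * (\<Sum>k\<le>Suc M. x k * of_nat (k choose Suc p))" .
  have "(\<Sum>j\<le>M. theta_slice L x j * of_nat (j choose p))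
      = of_real (theta_alpha L) * (\<Sum>j\<le>M. of_nat (Suc j) * x (Suc j) * of_nat (j choose p))
        - of_real (theta_beta L) * (\<Sum>j\<le>M. of_nat (j choose p) * (\<Sum>k\<le>j. x k))"
    unfolding theta_slice_def sum_distrib_left sum_subtractf[symmetric]
    by (intro sum.cong refl) (simp add: algebra_simps sum_distrib_left sum_distrib_right)
  then show ?thesis
    unfolding derivative_part sum_binomial_times_partial_sums
    by (simp add: algebra_simps sum_distrib_left sum.distrib)
qed

section \<open>Binomial moments on antidiagonals\<close>

definition antidiag_moment :: "(nat \<times> nat \<Rightarrow> complex) \<Rightarrow> nat \<Rightarrow> nat \<Rightarrow> complex" where
  "antidiag_moment a N p = (\<Sum>k\<le>N. antidiag a N k * of_nat (k choose p))"

definition antidiag_moments_vanish :: "nat \<Rightarrow> (nat \<times> nat \<Rightarrow> complex) \<Rightarrow> bool" where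
  "antidiag_moments_vanish n a \<longleftrightarrow> (\<forall>N p. p < n \<longrightarrow> antidiag_moment a N p = 0)"

lemma antidiag_moment_0: "antidiag_moment a N 0 = (\<Sum>k\<le>N. antidiag a N k)"
  by (simp add: antidiag_moment_def)

lemma antidiag_moments_vanish_1_iff:
  "antidiag_moments_vanish 1 a \<longleftrightarrow> (\<forall>N. (\<Sum>k\<le>N. antidiag a N k) = 0)"
  by (simp add: antidiag_moments_vanish_def antidiag_moment_0)

lemma antidiag_moments_vanish_mono:
  "antidiag_moments_vanish n a \<Longrightarrow> m \<le> n \<Longrightarrow> antidiag_moments_vanish m a"
  by (simp add: antidiag_moments_vanish_def)

lemma antidiag_moment_theta_coeffs:
  assumes "antidiag_moments_vanish 1 a"
  shows "antidiag_moment (theta_coeffs L a) M q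
           = (of_real (theta_alpha L) * of_nat (Suc q) + of_real (theta_beta L))
               * antidiag_moment a (Suc M) (Suc q)"
proof -
  have "antidiag_moment (theta_coeffs L a) M q
      = (\<Sum>j\<le>M. theta_slice L (antidiag a (Suc M)) j * of_nat (j choose q))"
    unfolding antidiag_moment_def by (intro sum.cong refl) (simp add: antidiag_theta_coeffs)
  also have "\<dots> = (of_real (theta_alpha L) * of_nat (Suc q) + of_real (theta_beta L))
                    * antidiag_moment a (Suc M) (Suc q)"
  proof -
    have "(\<Sum>k\<le>Suc M. antidiag a (Suc M) k) = 0"
      using assms unfolding antidiag_moments_vanish_1_iff by blast
    then show ?thesis unfolding theta_slice_binomial_moment by (simp add: antidiag_moment_def)
  qed
  finally show ?thesis .
qed

lemma antidiag_moments_vanish_theta_coeffs_iff: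
  assumes "L > 1" and "n \<ge> 1"
  shows "antidiag_moments_vanish n a \<longleftrightarrow>
           antidiag_moments_vanish 1 a \<and> antidiag_moments_vanish (n - 1) (theta_coeffs L a)"
proof -
  note nonzero = theta_alpha_Suc_plus_beta_nonzero[OF assms(1)]
  have moment_0_Suc: "antidiag_moment a 0 (Suc q) = 0" for q
    by (simp add: antidiag_moment_def)
  show ?thesis
  proof safe
    assume "antidiag_moments_vanish n a"
    then show "antidiag_moments_vanish 1 a" using assms(2) by (rule antidiag_moments_vanish_mono)
    then show "antidiag_moments_vanish (n - 1) (theta_coeffs L a)"
      using \<open>antidiag_moments_vanish n a\<close>
      by (auto simp: antidiag_moments_vanish_def antidiag_moment_theta_coeffs)
  next
    assume one: "antidiag_moments_vanish 1 a"
      and theta: "antidiag_moments_vanish (n - 1) (theta_coeffs L a)"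
    have "antidiag_moment a N p = 0" if "p < n" for N p
    proof (cases p)
      case 0
      then show ?thesis using one by (simp add: antidiag_moments_vanish_def)
    next
      case (Suc q)
      show ?thesis
      proof (cases N)
        case (Suc M)
        have "antidiag_moment (theta_coeffs L a) M q = 0"
          using theta that \<open>p = Suc q\<close> by (simp add: antidiag_moments_vanish_def)
        then show ?thesis
          using nonzero[of q] \<open>p = Suc q\<close> Suc by (simp add: antidiag_moment_theta_coeffs[OF one])
      qed (simp add: \<open>p = Suc q\<close> moment_0_Suc)
    qed
    then show "antidiag_moments_vanish n a" by (simp add: antidiag_moments_vanish_def)
  qed
qed

definition falling_factorial_poly :: "nat \<Rightarrow> complex poly" where
  "falling_factorial_poly m = (\<Prod>i<m. [:- of_nat i, 1:])"

lemma poly_falling_factorial_poly: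
  "poly (falling_factorial_poly m) (of_nat k) = fact m * of_nat (k choose m)"
proof -
  have "of_nat (k choose m) = (of_nat k gchoose m :: complex)" by (rule binomial_gbinomial)
  also have "\<dots> = (\<Prod>i=0..<m. of_nat k - of_nat i) / fact m" by (simp add: gbinomial_prod_rev)
  finally show ?thesis by (simp add: falling_factorial_poly_def poly_prod atLeast0LessThan)
qed

lemma degree_falling_factorial_poly: "degree (falling_factorial_poly m) = m"
  unfolding falling_factorial_poly_def by (subst degree_prod_sum_eq) auto

lemma lead_coeff_falling_factorial_poly: "lead_coeff (falling_factorial_poly m) = 1"
  unfolding falling_factorial_poly_def lead_coeff_prod by simp

lemma antidiag_poly_moment_falling_factorial_poly:
  "(\<Sum>k\<le>N. antidiag a N k * poly (falling_factorial_poly m) (of_nat k)) = fact m * antidiag_moment a N m"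
  by (simp add: poly_falling_factorial_poly antidiag_moment_def sum_distrib_left algebra_simps)

lemma degree_minus_lead_coeff_falling_factorial_poly:
  assumes "degree Q = m"
  defines "R \<equiv> Q - smult (lead_coeff Q) (falling_factorial_poly m)"
  shows "degree R < m \<or> R = 0"
proof -
  have "degree R \<le> m" unfolding R_def using assms degree_falling_factorial_poly[of m]
    by (metis degree_diff_le degree_smult_le le_trans order_refl)
  moreover have "coeff R m = 0"
    unfolding R_def using assms degree_falling_factorial_poly[of m]
      lead_coeff_falling_factorial_poly[of m] by simp
  ultimately show ?thesis by (metis le_neq_implies_less leading_coeff_0_iff)
qed

lemma antidiag_poly_moment_eq_0:
  assumes "antidiag_moments_vanish n a" and "degree Q < n"
  shows "(\<Sum>k\<le>N. antidiag a N k * poly Q (of_nat k)) = 0"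
  using assms
proof (induction n arbitrary: Q)
  case (Suc m)
  have IH: "(\<Sum>k\<le>N. antidiag a N k * poly R (of_nat k)) = 0" if "degree R < m \<or> R = 0" for R
    using that Suc.IH[OF antidiag_moments_vanish_mono[OF Suc.prems(1)]] by auto
  show ?case
  proof (cases "degree Q < m")
    case False
    then have "degree Q = m" using Suc.prems(2) by simp
    define R where "R = Q - smult (lead_coeff Q) (falling_factorial_poly m)"
    have "poly Q x = poly R x + lead_coeff Q * poly (falling_factorial_poly m) x" for x
      by (simp add: R_def)
    then have "(\<Sum>k\<le>N. antidiag a N k * poly Q (of_nat k))
        = (\<Sum>k\<le>N. antidiag a N k * poly R (of_nat k))
          + lead_coeff Q * (\<Sum>k\<le>N. antidiag a N k * poly (falling_factorial_poly m) (of_nat k))"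
      by (simp add: algebra_simps sum.distrib sum_distrib_left)
    also have "\<dots> = 0"
      using IH[OF degree_minus_lead_coeff_falling_factorial_poly[OF \<open>degree Q = m\<close>, folded R_def]]
        Suc.prems(1)
      by (simp add: antidiag_poly_moment_falling_factorial_poly antidiag_moments_vanish_def)
    finally show ?thesis .
  qed (use IH in blast)
qed simp

definition antidiag_mixed_moment :: "(nat \<times> nat \<Rightarrow> complex) \<Rightarrow> nat \<Rightarrow> nat \<Rightarrow> nat \<Rightarrow> complex" where
  "antidiag_mixed_moment a D i j =
     (\<Sum>k\<le>D. antidiag a D k * of_nat ((D - k) choose i) * of_nat (k choose j))"

lemma antidiag_mixed_moment_eq_0:
  assumes "D < i + j"
  shows "antidiag_mixed_moment a D i j = 0"
proof -
  have "antidiag a D k * of_nat ((D - k) choose i) * of_nat (k choose j) = 0" if "k \<le> D" for k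
  proof (cases "k < j")
    case False
    then have "D - k < i" using assms that by linarith
    then show ?thesis by simp
  qed simp
  then show ?thesis unfolding antidiag_mixed_moment_def by (intro sum.neutral) simp
qed

lemma antidiag_mixed_moments_iff:
  "(\<forall>D i j. i + j < n \<longrightarrow> antidiag_mixed_moment a D i j = 0) \<longleftrightarrow> antidiag_moments_vanish n a"
proof
  assume mixed: "\<forall>D i j. i + j < n \<longrightarrow> antidiag_mixed_moment a D i j = 0"
  have "antidiag_moment a N p = 0" if "p < n" for N p
    using mixed[rule_format, of 0 p N] that
    by (simp add: antidiag_moment_def antidiag_mixed_moment_def)
  then show "antidiag_moments_vanish n a" by (simp add: antidiag_moments_vanish_def)
next
  assume moments: "antidiag_moments_vanish n a"
  show "\<forall>D i j. i + j < n \<longrightarrow> antidiag_mixed_moment a D i j = 0"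
  proof (intro allI impI)
    fix D i j assume ij: "i + j < n"
    define Q where "Q = smult (1 / (fact i * fact j))
      (pcompose (falling_factorial_poly i) [:of_nat D, -1:] * falling_factorial_poly j)"
    have "degree Q \<le> i + j"
      unfolding Q_def
      by (rule order_trans[OF degree_smult_le order_trans[OF degree_mult_le]])
         (simp add: degree_pcompose degree_falling_factorial_poly)
    then have "(\<Sum>k\<le>D. antidiag a D k * poly Q (of_nat k)) = 0"
      using ij by (intro antidiag_poly_moment_eq_0[OF moments]) simp
    moreover have "poly Q (of_nat k) = of_nat ((D - k) choose i) * of_nat (k choose j)" if "k \<le> D" for k
      using that
      by (simp add: Q_def poly_pcompose poly_falling_factorial_poly flip: of_nat_diff)
    ultimately show "antidiag_mixed_moment a D i j = 0"
      by (simp add: antidiag_mixed_moment_def mult.assoc)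
  qed
qed

section \<open>Regrouping double series\<close>

lemma has_sum_diff:
  fixes f g :: "'a \<Rightarrow> 'b::topological_ab_group_add"
  assumes "(f has_sum a) A" and "(g has_sum b) A"
  shows "((\<lambda>x. f x - g x) has_sum (a - b)) A"
  using has_sum_add[OF assms(1) has_sum_uminus[where f = g and a = "- b", THEN iffD2]] assms(2) by simp

lemma has_sum_rows:
  fixes \<phi> :: "'a \<times> 'b \<Rightarrow> complex"
  assumes "(\<phi> has_sum S) UNIV"
  shows "((\<lambda>x. \<Sum>\<^sub>\<infinity>y. \<phi> (x, y)) has_sum S) UNIV"
proof -
  have "(\<lambda>(x, y). \<phi> (x, y)) summable_on UNIV \<times> UNIV"
    using assms by (simp add: has_sum_imp_summable)
  then have rows: "((\<lambda>y. \<phi> (x, y)) has_sum (\<Sum>\<^sub>\<infinity>y. \<phi> (x, y))) UNIV" for x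
    using summable_on_SigmaD1[of "\<lambda>x y. \<phi> (x, y)" UNIV "\<lambda>_. UNIV" x] by (simp add: has_sum_infsum)
  have "(\<phi> has_sum S) (UNIV \<times> UNIV)" using assms by simp
  then show ?thesis by (rule has_sum_Sigma') (rule rows)
qed

lemma has_sum_columns:
  fixes \<phi> :: "'a \<times> 'b \<Rightarrow> complex"
  assumes "(\<phi> has_sum S) UNIV"
  shows "((\<lambda>y. \<Sum>\<^sub>\<infinity>x. \<phi> (x, y)) has_sum S) UNIV"
proof -
  have "((\<lambda>(y, x). \<phi> (x, y)) has_sum S) UNIV"
    using assms has_sum_swap[where f = \<phi> and A = UNIV and B = UNIV] by simp
  from has_sum_rows[OF this] show ?thesis by simp
qed

lemma has_sum_Suc_iff:
  fixes g :: "nat \<Rightarrow> 'a::{comm_monoid_add, topological_space}"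
  assumes "g 0 = 0"
  shows "((\<lambda>n. g (Suc n)) has_sum S) UNIV \<longleftrightarrow> (g has_sum S) UNIV"
proof -
  have "((\<lambda>n. g (Suc n)) has_sum S) UNIV \<longleftrightarrow> (g has_sum S) (range Suc)"
    by (subst has_sum_reindex) (simp_all add: o_def)
  also have "\<dots> \<longleftrightarrow> (g has_sum S) UNIV"
  proof (rule has_sum_cong_neutral)
    show "g n = 0" if "n \<in> UNIV - range Suc" for n
      using that assms by (cases n) auto
  qed auto
  finally show ?thesis .
qed

lemma has_sum_Suc_fst_iff:
  fixes g :: "nat \<times> 'b \<Rightarrow> 'a::{comm_monoid_add, topological_space}"
  assumes "\<And>k. g (0, k) = 0"
  shows "((\<lambda>(N, k). g (Suc N, k)) has_sum S) UNIV \<longleftrightarrow> (g has_sum S) UNIV"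
proof -
  have "((\<lambda>(N, k). g (Suc N, k)) has_sum S) UNIV \<longleftrightarrow> (g has_sum S) (range (\<lambda>(N, k). (Suc N, k)))"
    by (subst has_sum_reindex) (auto simp: inj_on_def o_def case_prod_unfold)
  also have "\<dots> \<longleftrightarrow> (g has_sum S) UNIV"
  proof (rule has_sum_cong_neutral)
    show "g p = 0" if "p \<in> UNIV - range (\<lambda>(N, k). (Suc N, k))" for p
    proof (cases p)
      case (Pair m k)
      with that have "m = 0" by (cases m) auto
      then show ?thesis using assms Pair by simp
    qed
  qed auto
  finally show ?thesis .
qed

lemma bij_betw_antidiag: "bij_betw (\<lambda>(N, k). (N - k, k)) (SIGMA N:UNIV. {..N::nat}) UNIV"
  by (rule bij_betw_byWitness[where f' = "\<lambda>(m, k). (m + k, k)"]) auto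

lemma bij_betw_antidiag_param:
  "bij_betw (\<lambda>((N::nat, x), k). ((N - k, k), x)) (SIGMA p:UNIV. {..fst p}) UNIV"
  by (rule bij_betw_byWitness[where f' = "\<lambda>((m, k), x). ((m + k, x), k)"]) auto

lemma has_sum_antidiag:
  fixes \<phi> :: "nat \<times> nat \<Rightarrow> 'a::{comm_monoid_add, uniform_space, uniform_topological_group_add}"
  assumes "(\<phi> has_sum S) UNIV"
  shows "((\<lambda>N. \<Sum>k\<le>N. \<phi> (N - k, k)) has_sum S) UNIV"
proof -
  have "((\<lambda>(N, k). \<phi> (N - k, k)) has_sum S) (SIGMA N:UNIV. {..N})"
    using has_sum_reindex_bij_betw[OF bij_betw_antidiag, where f = \<phi>] assms
    by (simp add: case_prod_beta')
  then show ?thesis by (rule has_sum_Sigma') auto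
qed

lemma has_sum_antidiag_param:
  fixes \<psi> :: "(nat \<times> nat) \<times> 'x \<Rightarrow> 'a::{comm_monoid_add, uniform_space, uniform_topological_group_add}"
  assumes "(\<psi> has_sum S) UNIV"
  shows "((\<lambda>(N, x). \<Sum>k\<le>N. \<psi> ((N - k, k), x)) has_sum S) UNIV"
proof -
  have "((\<lambda>((N, x), k). \<psi> ((N - k, k), x)) has_sum S) (SIGMA p:UNIV. {..fst p})"
    using has_sum_reindex_bij_betw[OF bij_betw_antidiag_param, where f = \<psi>] assms
    by (simp add: case_prod_beta')
  then show ?thesis by (rule has_sum_Sigma') (auto simp: case_prod_unfold)
qed

lemma summable_on_antidiag_iff:
  fixes \<phi> :: "nat \<times> nat \<Rightarrow> real"
  assumes "\<And>p. \<phi> p \<ge> 0"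
  shows "\<phi> summable_on UNIV \<longleftrightarrow> (\<lambda>N. \<Sum>k\<le>N. \<phi> (N - k, k)) summable_on UNIV"
proof
  assume "\<phi> summable_on UNIV"
  then show "(\<lambda>N. \<Sum>k\<le>N. \<phi> (N - k, k)) summable_on UNIV"
    using has_sum_antidiag[of \<phi>] by (meson has_sum_imp_summable summable_iff_has_sum_infsum)
next
  assume "(\<lambda>N. \<Sum>k\<le>N. \<phi> (N - k, k)) summable_on UNIV"
  then have "(\<lambda>(N, k). \<phi> (N - k, k)) summable_on (SIGMA N:UNIV. {..N})"
    by (intro summable_on_SigmaI[where g = "\<lambda>N. \<Sum>k\<le>N. \<phi> (N - k, k)"])
       (auto intro: has_sum_finiteI assms)
  then show "\<phi> summable_on UNIV"
    using summable_on_reindex_bij_betw[OF bij_betw_antidiag, where f = \<phi>] by (simp add: case_prod_beta')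
qed

lemma summable_on_antidiag_paramI:
  fixes \<psi> :: "(nat \<times> nat) \<times> 'x \<Rightarrow> real"
  assumes "\<And>p. \<psi> p \<ge> 0" and "(\<lambda>(N, x). \<Sum>k\<le>N. \<psi> ((N - k, k), x)) summable_on UNIV"
  shows "\<psi> summable_on UNIV"
proof -
  have "(\<lambda>((N, x), k). \<psi> ((N - k, k), x)) summable_on (SIGMA p:UNIV. {..fst p})"
    by (intro summable_on_SigmaI[where g = "\<lambda>(N, x). \<Sum>k\<le>N. \<psi> ((N - k, k), x)"])
       (use assms in \<open>auto intro: has_sum_finiteI simp: case_prod_unfold\<close>)
  then show ?thesis
    using summable_on_reindex_bij_betw[OF bij_betw_antidiag_param, where f = \<psi>]
    by (simp add: case_prod_beta')
qed

section \<open>Square-summable coefficient arrays\<close>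

lemma wt_pos: "\<mu> > 0 \<Longrightarrow> wt \<mu> n > 0"
  unfolding wt_def by (intro divide_pos_pos pochhammer_pos) auto

lemma wt_inverse_sums:
  fixes y :: real
  assumes "\<bar>y\<bar> < 1"
  shows "(\<lambda>n. y ^ n / wt \<mu> n) sums (1 - y) powr (- \<mu>)"
proof -
  have "((- \<mu>) gchoose n) * (- y) ^ n = y ^ n / wt \<mu> n" for n
    by (simp add: wt_def gbinomial_pochhammer power_minus')
  then show ?thesis using gen_binomial_real[of "- y" "- \<mu>"] assms by simp
qed

definition wt_square_summable :: "real \<Rightarrow> (nat \<times> nat \<Rightarrow> complex) \<Rightarrow> bool" where
  "wt_square_summable \<mu> a \<longleftrightarrow> (\<lambda>(m, n). (norm (a (m, n)))\<^sup>2 * wt \<mu> n) summable_on UNIV"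

lemma wt_square_summable_iff_antidiag:
  assumes "\<mu> > 0"
  shows "wt_square_summable \<mu> a \<longleftrightarrow>
           (\<lambda>N. \<Sum>k\<le>N. (norm (antidiag a N k))\<^sup>2 * wt \<mu> k) summable_on UNIV"
proof -
  have "0 \<le> (\<lambda>(m, n). (norm (a (m, n)))\<^sup>2 * wt \<mu> n) p" for p
    using wt_pos[OF assms, of "snd p"] by (simp add: case_prod_unfold)
  then show ?thesis
    unfolding wt_square_summable_def antidiag_def by (subst summable_on_antidiag_iff) auto
qed

lemma wt_square_summable_inner_summable:
  assumes "\<mu> > 0" and "wt_square_summable \<mu> a" and "wt_square_summable \<mu> b"
  shows "(\<lambda>(m, n). a (m, n) * cnj (b (m, n)) * of_real (wt \<mu> n)) summable_on UNIV"
proof -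
  have "norm (a p * cnj (b p) * of_real (wt \<mu> n)) \<le> (norm (a p))\<^sup>2 * wt \<mu> n + (norm (b p))\<^sup>2 * wt \<mu> n"
    for p n
  proof -
    have "0 \<le> norm (a p) * norm (b p)" by simp
    then have "norm (a p) * norm (b p) \<le> (norm (a p))\<^sup>2 + (norm (b p))\<^sup>2"
      using sum_squares_bound[of "norm (a p)" "norm (b p)"] unfolding mult.assoc by linarith
    then have "norm (a p) * norm (b p) * wt \<mu> n \<le> ((norm (a p))\<^sup>2 + (norm (b p))\<^sup>2) * wt \<mu> n"
      using wt_pos[OF assms(1), of n] by (intro mult_right_mono) auto
    then show ?thesis
      using wt_pos[OF assms(1), of n] by (simp add: norm_mult distrib_right)
  qed
  note bound = this
  have "(\<lambda>p. (\<lambda>(m, n). (norm (a (m, n)))\<^sup>2 * wt \<mu> n) p + (\<lambda>(m, n). (norm (b (m, n)))\<^sup>2 * wt \<mu> n) p)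
          summable_on UNIV"
    using assms(2,3) unfolding wt_square_summable_def by (rule summable_on_add)
  then have "(\<lambda>p. norm ((\<lambda>(m, n). a (m, n) * cnj (b (m, n)) * of_real (wt \<mu> n)) p)) summable_on UNIV"
    by (rule summable_on_comparison_test) (auto simp: case_prod_unfold bound)
  then show ?thesis by (rule abs_summable_summable)
qed

lemma antidiag_theta_coeffs_inner_identity:
  assumes "L > 1"
  shows "(\<Sum>j\<le>M. antidiag (theta_coeffs L a) M j * cnj (antidiag (theta_coeffs L b) M j)
                    * of_real (wt (L + 1) j))
           + of_real (wt L (Suc M)) * (\<Sum>k\<le>Suc M. antidiag a (Suc M) k)
               * cnj (\<Sum>k\<le>Suc M. antidiag b (Suc M) k)
         = (\<Sum>k\<le>Suc M. antidiag a (Suc M) k * cnj (antidiag b (Suc M) k) * of_real (wt (L - 1) k))"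
  using theta_slice_inner_identity[OF assms, where N = "Suc M"]
  by (simp add: lessThan_Suc_atMost antidiag_theta_coeffs del: sum.atMost_Suc)

lemma antidiag_theta_coeffs_norm_identity:
  assumes "L > 1"
  shows "(\<Sum>j\<le>M. (norm (antidiag (theta_coeffs L a) M j))\<^sup>2 * wt (L + 1) j)
           + wt L (Suc M) * (norm (\<Sum>k\<le>Suc M. antidiag a (Suc M) k))\<^sup>2
         = (\<Sum>k\<le>Suc M. (norm (antidiag a (Suc M) k))\<^sup>2 * wt (L - 1) k)"
  using theta_slice_norm_identity[OF assms, where N = "Suc M"]
  by (simp add: lessThan_Suc_atMost antidiag_theta_coeffs del: sum.atMost_Suc)

lemma theta_coeffs_square_summable:
  assumes L: "L > 1" and a: "wt_square_summable (L - 1) a"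
  shows "wt_square_summable (L + 1) (theta_coeffs L a)"
proof -
  define s where "s N = (\<Sum>k\<le>N. (norm (antidiag a N k))\<^sup>2 * wt (L - 1) k)" for N
  have "s summable_on UNIV" using a L unfolding s_def by (subst (asm) wt_square_summable_iff_antidiag) auto
  then have "s summable_on range Suc" by (rule summable_on_subset_banach) simp
  then have s_Suc: "(\<lambda>M. s (Suc M)) summable_on UNIV" by (subst (asm) summable_on_reindex) (auto simp: o_def)
  have "(\<Sum>j\<le>M. (norm (antidiag (theta_coeffs L a) M j))\<^sup>2 * wt (L + 1) j) \<le> s (Suc M)" for M
  proof -
    have "0 < wt L (Suc M)" using L by (intro wt_pos) simp
    then have "0 \<le> wt L (Suc M) * (norm (\<Sum>k\<le>Suc M. antidiag a (Suc M) k))\<^sup>2"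
      by (simp add: zero_le_mult_iff)
    then show ?thesis using antidiag_theta_coeffs_norm_identity[OF L, where a = a and M = M] unfolding s_def by linarith
  qed
  moreover have "0 \<le> (\<Sum>j\<le>M. (norm (antidiag (theta_coeffs L a) M j))\<^sup>2 * wt (L + 1) j)" for M
    using wt_pos[of "L + 1"] L by (intro sum_nonneg) (simp add: less_imp_le)
  ultimately have "(\<lambda>M. \<Sum>j\<le>M. (norm (antidiag (theta_coeffs L a) M j))\<^sup>2 * wt (L + 1) j)
                     summable_on UNIV"
    by (intro summable_on_comparison_test[OF s_Suc])
  then show ?thesis using L by (subst wt_square_summable_iff_antidiag) auto
qed

lemma exists_theta_coeffs_preimage:
  assumes L: "L > 1"
  shows "\<exists>u. theta_coeffs L u = c \<and> antidiag_moments_vanish 1 u"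
proof -
  have "\<forall>M. \<exists>x. (\<forall>j<Suc M. theta_slice L x j = antidiag c M j) \<and> (\<Sum>k\<le>Suc M. x k) = 0"
    using theta_slice_solvable[OF L] by blast
  then obtain X where X: "\<And>M j. j < Suc M \<Longrightarrow> theta_slice L (X M) j = antidiag c M j"
    and X_sum: "\<And>M. (\<Sum>k\<le>Suc M. X M k) = 0"
    by metis
  define u where "u = (\<lambda>(m, k). if m + k = 0 then 0 else X (m + k - 1) k)"
  have u_Suc: "antidiag u (Suc M) k = X M k" if "k \<le> Suc M" for M k
    using that by (auto simp: u_def antidiag_def)
  have "theta_coeffs L u = c"
  proof
    fix p :: "nat \<times> nat"
    obtain i j where p: "p = (i, j)" by force
    have "theta_slice L (antidiag u (Suc (i + j))) j = theta_slice L (X (i + j)) j"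
      by (rule theta_slice_cong) (simp add: u_Suc)
    then show "theta_coeffs L u p = c p" by (simp add: p theta_coeffs_def X antidiag_def)
  qed
  moreover have "(\<Sum>k\<le>N. antidiag u N k) = 0" for N
  proof (cases N)
    case 0
    then show ?thesis by (simp add: u_def antidiag_def)
  qed (simp add: u_Suc X_sum del: sum.atMost_Suc)
  ultimately show ?thesis unfolding antidiag_moments_vanish_1_iff by blast
qed

lemma wt_square_summable_of_theta_coeffs:
  assumes L: "L > 1" and u: "antidiag_moments_vanish 1 u"
    and Tu: "wt_square_summable (L + 1) (theta_coeffs L u)"
  shows "wt_square_summable (L - 1) u"
proof -
  have sums: "(\<Sum>k\<le>N. antidiag u N k) = 0" for N
    using u unfolding antidiag_moments_vanish_1_iff by blast
  define g where "g N = (\<Sum>k\<le>N. (norm (antidiag u N k))\<^sup>2 * wt (L - 1) k)" for N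
  define s where "s M = (\<Sum>j\<le>M. (norm (antidiag (theta_coeffs L u) M j))\<^sup>2 * wt (L + 1) j)" for M
  have "s summable_on UNIV"
    using Tu L unfolding s_def by (subst (asm) wt_square_summable_iff_antidiag) auto
  moreover have "g (Suc M) = s M" for M
    using antidiag_theta_coeffs_norm_identity[OF L, where a = u and M = M]
    unfolding g_def s_def sums by simp
  ultimately have "((\<lambda>M. g (Suc M)) has_sum infsum s UNIV) UNIV"
    by (simp add: has_sum_infsum)
  moreover have "g 0 = 0" using sums[of 0] by (simp add: g_def)
  ultimately have "(g has_sum infsum s UNIV) UNIV"
    using has_sum_Suc_iff by blast
  then show ?thesis
    using L unfolding g_def by (subst wt_square_summable_iff_antidiag) (auto dest: has_sum_imp_summable)
qed

lemma infsum_theta_coeffs_inner: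
  assumes L: "L > 1" and a: "wt_square_summable (L - 1) a" and b: "wt_square_summable (L - 1) b"
    and b_sums: "antidiag_moments_vanish 1 b"
  shows "(\<Sum>\<^sub>\<infinity>(i, j). theta_coeffs L a (i, j) * cnj (theta_coeffs L b (i, j)) * of_real (wt (L + 1) j))
       = (\<Sum>\<^sub>\<infinity>(m, n). a (m, n) * cnj (b (m, n)) * of_real (wt (L - 1) n))"
proof -
  define F where "F = (\<lambda>(i, j). theta_coeffs L a (i, j) * cnj (theta_coeffs L b (i, j)) * of_real (wt (L + 1) j))"
  define G where "G = (\<lambda>(m, n). a (m, n) * cnj (b (m, n)) * of_real (wt (L - 1) n))"
  have "F summable_on UNIV" unfolding F_def
    using L a b by (intro wt_square_summable_inner_summable theta_coeffs_square_summable) auto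
  then have F: "((\<lambda>M. \<Sum>j\<le>M. F (M - j, j)) has_sum infsum F UNIV) UNIV"
    by (intro has_sum_antidiag) simp
  have "G summable_on UNIV" unfolding G_def
    using L a b by (intro wt_square_summable_inner_summable) auto
  then have G: "((\<lambda>N. \<Sum>k\<le>N. G (N - k, k)) has_sum infsum G UNIV) UNIV"
    by (intro has_sum_antidiag) simp
  have b0: "(\<Sum>k\<le>N. antidiag b N k) = 0" for N
    using b_sums unfolding antidiag_moments_vanish_1_iff by blast
  have "(\<Sum>j\<le>M. F (M - j, j)) = (\<Sum>k\<le>Suc M. G (Suc M - k, k))" for M
    using antidiag_theta_coeffs_inner_identity[OF L, where M = M and a = a and b = b] unfolding b0
    by (simp add: F_def G_def antidiag_def del: sum.atMost_Suc)
  moreover have "(\<Sum>k\<le>0. G (0 - k, k)) = 0" using b0[of 0] by (simp add: G_def antidiag_def)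
  ultimately have "((\<lambda>N. \<Sum>k\<le>N. G (N - k, k)) has_sum infsum F UNIV) UNIV"
    using F has_sum_Suc_iff[of "\<lambda>N. \<Sum>k\<le>N. G (N - k, k)"] by simp
  with G have "infsum F UNIV = infsum G UNIV" using has_sum_unique by blast
  then show ?thesis by (simp add: F_def G_def)
qed

section \<open>Power series on the bidisc\<close>

lemma powser_has_sum_0_imp_zero:
  fixes c :: "nat \<Rightarrow> complex"
  assumes "\<And>z. norm z < 1 \<Longrightarrow> ((\<lambda>n. c n * z ^ n) has_sum 0) UNIV"
  shows "c = (\<lambda>_. 0)"
proof -
  have "c k = 0" for k
  proof (induction k rule: less_induct)
    case (less k)
    have "(\<lambda>n. c (n + k) * z ^ n) sums 0" if z: "z \<noteq> 0" "norm z < 1" for z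
    proof -
      have "(\<lambda>n. c n * z ^ n) sums 0" using assms[OF z(2)] by (rule has_sum_imp_sums)
      then have "(\<lambda>n. c (n + k) * z ^ (n + k)) sums 0"
        using less by (subst sums_zero_iff_shift) auto
      then have "(\<lambda>n. c (n + k) * z ^ n * z ^ k / z ^ k) sums (0 / z ^ k)"
        by (intro sums_divide) (simp add: power_add mult.assoc)
      then show ?thesis using z(1) by simp
    qed
    then have "((\<lambda>_. 0) \<longlongrightarrow> c (0 + k)) (at (0 :: complex))"
      by (intro powser_limit_0_strong[of 1]) auto
    then show "c k = 0" by (simp add: tendsto_const_iff)
  qed
  then show ?thesis by auto
qed

lemma has_expansion_unique:
  assumes "has_expansion a f" and "has_expansion b f"
  shows "a = b"
proof -
  define d where "d p = a p - b p" for p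
  have d: "((\<lambda>(m, n). d (m, n) * z ^ m * w ^ n) has_sum 0) UNIV" if "norm z < 1" "norm w < 1" for z w
  proof -
    have "((\<lambda>p. (\<lambda>(m, n). a (m, n) * z ^ m * w ^ n) p - (\<lambda>(m, n). b (m, n) * z ^ m * w ^ n) p)
            has_sum (f (z, w) - f (z, w))) UNIV"
      using assms that unfolding has_expansion_def by (intro has_sum_diff) auto
    then show ?thesis by (simp add: d_def case_prod_unfold algebra_simps)
  qed
  have column_series: "(\<lambda>n. \<Sum>\<^sub>\<infinity>m. d (m, n) * z ^ m) = (\<lambda>_. 0)" if z: "norm z < 1" for z
  proof (rule powser_has_sum_0_imp_zero)
    fix w :: complex assume "norm w < 1"
    from has_sum_columns[OF d[OF z this]]
    show "((\<lambda>n. (\<Sum>\<^sub>\<infinity>m. d (m, n) * z ^ m) * w ^ n) has_sum 0) UNIV"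
      by (simp add: infsum_cmult_left')
  qed
  have "(\<lambda>m. d (m, n)) = (\<lambda>_. 0)" for n
  proof (rule powser_has_sum_0_imp_zero)
    fix z :: complex assume z: "norm z < 1"
    have "(\<lambda>(m, k). d (m, k) * z ^ m * of_real (1 / 2) ^ k) summable_on UNIV"
      using d[OF z, of "of_real (1 / 2)"] by (auto dest: has_sum_imp_summable)
    then have "(\<lambda>(m, k). d (m, k) * z ^ m * of_real (1 / 2) ^ k) summable_on range (\<lambda>m. (m, n))"
      by (rule summable_on_subset_banach) simp
    then have "(\<lambda>m. d (m, n) * z ^ m * of_real (1 / 2) ^ n) summable_on UNIV"
      by (subst (asm) summable_on_reindex) (auto simp: inj_on_def o_def)
    then have "(\<lambda>m. d (m, n) * z ^ m) summable_on UNIV"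
      by (subst (asm) summable_on_cmult_left') auto
    then show "((\<lambda>m. d (m, n) * z ^ m) has_sum 0) UNIV"
      using fun_cong[OF column_series[OF z], of n] by (metis has_sum_infsum)
  qed
  then show ?thesis by (auto simp: d_def fun_eq_iff dest: fun_cong)
qed

lemma coeffs_eqI: "has_expansion a f \<Longrightarrow> coeffs f = a"
  unfolding coeffs_def by (metis (mono_tags) someI_ex has_expansion_unique)

lemma Hsp_iff_coeffs: "f \<in> Hsp \<mu> \<longleftrightarrow> has_expansion (coeffs f) f \<and> wt_square_summable \<mu> (coeffs f)"
  unfolding Hsp_def wt_square_summable_def using coeffs_eqI by blast

lemma wt_kernel_summable:
  assumes mu: "\<mu> > 0" and x: "0 \<le> x" "x < 1" and y: "0 \<le> y" "y < 1"
  shows "(\<lambda>(m, n). x ^ m * (y ^ n / wt \<mu> n)) summable_on UNIV"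
proof -
  have wt: "wt \<mu> n > 0" for n using wt_pos[OF mu] .
  have "((\<lambda>n. y ^ n / wt \<mu> n) has_sum (1 - y) powr (- \<mu>)) UNIV"
    using wt_inverse_sums[of y \<mu>] y wt by (intro sums_nonneg_imp_has_sum) (auto intro!: divide_nonneg_pos)
  then have "((\<lambda>n. x ^ m * (y ^ n / wt \<mu> n)) has_sum x ^ m * (1 - y) powr (- \<mu>)) UNIV" for m
    by (rule has_sum_cmult_right)
  moreover have "(\<lambda>m. x ^ m * (1 - y) powr (- \<mu>)) summable_on UNIV"
    using x by (intro summable_on_cmult_left summable_nonneg_imp_summable_on summable_geometric) auto
  ultimately have "(\<lambda>(m, n). x ^ m * (y ^ n / wt \<mu> n)) summable_on UNIV \<times> UNIV"
    using x y wt by (intro summable_on_SigmaI) (auto intro!: mult_nonneg_nonneg divide_nonneg_pos)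
  then show ?thesis by simp
qed

text \<open>By AM-GM, \<open>|u z^m w^n| \<le> |u|\<^sup>2 wt + |z|^(2m) |w|^(2n) / wt\<close>, and the second term sums to the
  reproducing kernel.\<close>
lemma has_expansion_of_wt_square_summable:
  assumes mu: "\<mu> > 0" and u: "wt_square_summable \<mu> u"
  shows "has_expansion u (\<lambda>(z, w). \<Sum>\<^sub>\<infinity>(m, n). u (m, n) * z ^ m * w ^ n)"
  unfolding has_expansion_def
proof (intro allI impI, elim conjE)
  fix z w :: complex assume z: "norm z < 1" and w: "norm w < 1"
  define x y where "x = (norm z)\<^sup>2" and "y = (norm w)\<^sup>2"
  have kernel: "(\<lambda>(m, n). x ^ m * (y ^ n / wt \<mu> n)) summable_on UNIV"
    using z w by (intro wt_kernel_summable mu) (auto simp: x_def y_def abs_square_less_1)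
  have wt: "wt \<mu> n > 0" for n using wt_pos[OF mu] .
  have "norm (u (m, n) * z ^ m * w ^ n) \<le> (norm (u (m, n)))\<^sup>2 * wt \<mu> n + x ^ m * (y ^ n / wt \<mu> n)"
    for m n
  proof -
    define A where "A = norm (u (m, n)) * sqrt (wt \<mu> n)"
    define C where "C = norm z ^ m * norm w ^ n / sqrt (wt \<mu> n)"
    have "norm (u (m, n) * z ^ m * w ^ n) = A * C"
      using wt[of n] by (simp add: A_def C_def norm_mult norm_power)
    also have "\<dots> \<le> A\<^sup>2 + C\<^sup>2"
    proof -
      have "0 \<le> A * C" using wt[of n] by (simp add: A_def C_def)
      then show ?thesis using sum_squares_bound[of A C] unfolding mult.assoc by linarith
    qed
    also have "A\<^sup>2 + C\<^sup>2 = (norm (u (m, n)))\<^sup>2 * wt \<mu> n + x ^ m * (y ^ n / wt \<mu> n)"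
      using wt[of n]
      by (simp add: A_def C_def x_def y_def power_mult_distrib power_divide mult.commute
          flip: power_mult)
    finally show ?thesis .
  qed
  then have "(\<lambda>p. norm ((\<lambda>(m, n). u (m, n) * z ^ m * w ^ n) p)) summable_on UNIV"
    using summable_on_add[OF u[unfolded wt_square_summable_def] kernel]
    by (rule_tac summable_on_comparison_test) (auto simp: case_prod_unfold)
  then show "((\<lambda>(m, n). u (m, n) * z ^ m * w ^ n) has_sum
               (\<lambda>(z, w). \<Sum>\<^sub>\<infinity>(m, n). u (m, n) * z ^ m * w ^ n) (z, w)) UNIV"
    by (simp add: abs_summable_summable)
qed

lemma has_expansion_norm_summable:
  fixes z w :: complex
  assumes "has_expansion a f" and "norm z < 1" and "norm w < 1"
  shows "(\<lambda>(m, k). norm (a (m, k)) * norm w ^ k * norm z ^ m) summable_on UNIV"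
proof -
  have "(\<lambda>(m, k). a (m, k) * z ^ m * w ^ k) summable_on UNIV"
    using assms unfolding has_expansion_def by (auto dest: has_sum_imp_summable)
  then have "(\<lambda>p. norm ((\<lambda>(m, k). a (m, k) * z ^ m * w ^ k) p)) summable_on UNIV"
    by (simp add: summable_on_iff_abs_summable_on_complex)
  moreover have "norm ((\<lambda>(m, k). a (m, k) * z ^ m * w ^ k) p)
                   = (\<lambda>(m, k). norm (a (m, k)) * norm w ^ k * norm z ^ m) p" for p
    by (simp add: case_prod_unfold norm_mult norm_power)
  ultimately show ?thesis by simp
qed

lemma Suc_times_power_bounded:
  fixes q :: real
  assumes "0 \<le> q" and "q < 1"
  obtains B where "\<And>m. of_nat (Suc m) * q ^ m \<le> B"
proof -
  have "(\<lambda>n. of_nat n * q ^ n + q ^ n) \<longlonglongrightarrow> 0 + 0"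
    using assms by (intro tendsto_add powser_times_n_limit_0 LIMSEQ_power_zero) auto
  then have "(\<lambda>n. of_nat (Suc n) * q ^ n) \<longlonglongrightarrow> 0" by (simp add: algebra_simps)
  then have "Bseq (\<lambda>n. of_nat (Suc n) * q ^ n)" by (rule convergent_imp_Bseq[OF convergentI])
  then obtain K where "\<And>n. norm (of_nat (Suc n) * q ^ n) \<le> K" by (elim BseqE) auto
  then have "of_nat (Suc m) * q ^ m \<le> K" for m
    using abs_ge_self order_trans real_norm_def by metis
  then show ?thesis by (rule that)
qed

lemma summable_on_Suc_times_power:
  fixes c :: "nat \<times> 'a \<Rightarrow> real"
  assumes nonneg: "\<And>p. c p \<ge> 0" and \<rho>: "0 \<le> \<rho>" "\<rho> < r"
    and summable: "(\<lambda>(m, x). c (m, x) * r ^ m) summable_on UNIV"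
  shows "(\<lambda>(m, x). of_nat (Suc m) * c (Suc m, x) * \<rho> ^ m) summable_on UNIV"
proof -
  have r: "r > 0" using \<rho> by simp
  obtain B where B: "\<And>m. of_nat (Suc m) * (\<rho> / r) ^ m \<le> B"
    using Suc_times_power_bounded[of "\<rho> / r"] \<rho> r by auto
  have "(\<lambda>(m, x). c (m, x) * r ^ m) summable_on range (\<lambda>(m, x). (Suc m, x))"
    using summable by (rule summable_on_subset_banach) simp
  then have "(\<lambda>(m, x). c (Suc m, x) * r ^ Suc m) summable_on UNIV"
    by (subst (asm) summable_on_reindex) (auto simp: inj_on_def o_def case_prod_unfold)
  then have shifted: "(\<lambda>p. B / r * (\<lambda>(m, x). c (Suc m, x) * r ^ Suc m) p) summable_on UNIV"
    by (rule summable_on_cmult_right)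
  have "of_nat (Suc m) * c (Suc m, x) * \<rho> ^ m \<le> B / r * (c (Suc m, x) * r ^ Suc m)" for m x
  proof -
    have "of_nat (Suc m) * c (Suc m, x) * \<rho> ^ m
        = (of_nat (Suc m) * (\<rho> / r) ^ m) * (c (Suc m, x) * r ^ m)"
      using r by (simp add: power_divide)
    also have "\<dots> \<le> B * (c (Suc m, x) * r ^ m)"
      using B nonneg r by (intro mult_right_mono) auto
    finally show ?thesis using r by simp
  qed
  then show ?thesis
    using nonneg \<rho> by (intro summable_on_comparison_test[OF shifted]) (auto simp: case_prod_unfold)
qed

lemma has_expansion_derivative_majorant:
  fixes w :: complex
  assumes f: "has_expansion a f" and w: "norm w < 1" and \<rho>: "0 \<le> \<rho>" "\<rho> < 1"
  shows "(\<lambda>(m, k). of_nat (Suc m) * (norm (a (Suc m, k)) * norm w ^ k) * \<rho> ^ m) summable_on UNIV"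
proof -
  define r where "r = (1 + \<rho>) / 2"
  have r: "\<rho> < r" "r < 1" "0 < r" using \<rho> by (auto simp: r_def)
  then have "norm (complex_of_real r) = r" by simp
  then have "(\<lambda>(m, k). norm (a (m, k)) * norm w ^ k * r ^ m) summable_on UNIV"
    using has_expansion_norm_summable[OF f, of "of_real r" w] r w by simp
  then show ?thesis
    using summable_on_Suc_times_power[of "\<lambda>(m, k). norm (a (m, k)) * norm w ^ k" \<rho> r] r \<rho>
    by (simp add: case_prod_unfold)
qed

lemma has_expansion_row_sums:
  assumes "has_expansion a f" and "norm z < 1" and "norm w < 1"
  shows "(\<lambda>m. (\<Sum>\<^sub>\<infinity>k. a (m, k) * w ^ k) * z ^ m) sums f (z, w)"
proof -
  have "((\<lambda>(m, k). a (m, k) * z ^ m * w ^ k) has_sum f (z, w)) UNIV"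
    using assms unfolding has_expansion_def by blast
  from has_sum_rows[OF this]
  have "((\<lambda>m. \<Sum>\<^sub>\<infinity>k. a (m, k) * z ^ m * w ^ k) has_sum f (z, w)) UNIV" by simp
  moreover have "(\<Sum>\<^sub>\<infinity>k. a (m, k) * z ^ m * w ^ k) = (\<Sum>\<^sub>\<infinity>k. a (m, k) * w ^ k) * z ^ m" for m
  proof -
    have "(\<lambda>k. a (m, k) * z ^ m * w ^ k) = (\<lambda>k. a (m, k) * w ^ k * z ^ m)"
      by (simp add: fun_eq_iff mult_ac)
    then show ?thesis by (simp add: infsum_cmult_left')
  qed
  ultimately show ?thesis by (intro has_sum_imp_sums) simp
qed

definition dz_coeffs :: "(nat \<times> nat \<Rightarrow> complex) \<Rightarrow> nat \<times> nat \<Rightarrow> complex" where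
  "dz_coeffs a = (\<lambda>(m, k). of_nat (Suc m) * a (Suc m, k))"

definition dw_coeffs :: "(nat \<times> nat \<Rightarrow> complex) \<Rightarrow> nat \<times> nat \<Rightarrow> complex" where
  "dw_coeffs a = (\<lambda>(m, k). of_nat (Suc k) * a (m, Suc k))"

lemma dz_eq_row_series_deriv:
  assumes "has_expansion a f" and z: "norm z < 1" and w: "norm w < 1"
  shows "dz f (z, w) = (\<Sum>m. diffs (\<lambda>m. \<Sum>\<^sub>\<infinity>k. a (m, k) * w ^ k) m * z ^ m)"
proof -
  define c where "c = (\<lambda>m. \<Sum>\<^sub>\<infinity>k. a (m, k) * w ^ k)"
  define R where "R = complex_of_real ((1 + norm z) / 2)"
  have "norm R = (1 + norm z) / 2"
    unfolding R_def norm_of_real by (rule abs_of_nonneg) (simp add: add_nonneg_nonneg)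
  then have R: "norm z < norm R" "norm R < 1" using z by simp_all
  have rows: "(\<lambda>m. c m * y ^ m) sums f (y, w)" if "norm y < 1" for y
    unfolding c_def using has_expansion_row_sums[OF assms(1) that w] .
  have "summable (\<lambda>m. c m * R ^ m)" using rows[OF R(2)] by (simp add: sums_iff)
  from termdiffs_strong[OF this R(1)]
  have "((\<lambda>y. \<Sum>m. c m * y ^ m) has_field_derivative (\<Sum>m. diffs c m * z ^ m)) (at z)" .
  then have "((\<lambda>y. f (y, w)) has_field_derivative (\<Sum>m. diffs c m * z ^ m)) (at z)"
  proof (rule has_field_derivative_transform_within_open[where S = "ball 0 1"])
    show "(\<Sum>m. c m * y ^ m) = f (y, w)" if "y \<in> ball 0 1" for y
      using rows[of y] that by (simp add: sums_iff)
  qed (use z in auto)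
  then have "deriv (\<lambda>y. f (y, w)) z = (\<Sum>m. diffs c m * z ^ m)" by (rule DERIV_imp_deriv)
  then show ?thesis by (simp add: dz_def c_def)
qed

lemma has_expansion_dz:
  assumes "has_expansion a f"
  shows "has_expansion (dz_coeffs a) (dz f)"
  unfolding has_expansion_def
proof (intro allI impI, elim conjE)
  fix z w :: complex assume z: "norm z < 1" and w: "norm w < 1"
  define \<psi> where "\<psi> = (\<lambda>(m, k). dz_coeffs a (m, k) * z ^ m * w ^ k)"
  have "(\<lambda>(m, k). of_nat (Suc m) * (norm (a (Suc m, k)) * norm w ^ k) * norm z ^ m)
               summable_on UNIV"
    using has_expansion_derivative_majorant[OF assms w, of "norm z"] z by simp
  then have "(\<lambda>p. norm (\<psi> p)) summable_on UNIV"
    by (simp add: \<psi>_def dz_coeffs_def case_prod_unfold norm_mult norm_power mult_ac del: of_nat_Suc)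
  then have "\<psi> summable_on UNIV" by (rule abs_summable_summable)
  then have \<psi>: "(\<psi> has_sum infsum \<psi> UNIV) UNIV" by (rule has_sum_infsum)
  have row: "(\<Sum>\<^sub>\<infinity>k. \<psi> (m, k)) = diffs (\<lambda>m. \<Sum>\<^sub>\<infinity>k. a (m, k) * w ^ k) m * z ^ m" for m
  proof -
    have "(\<Sum>\<^sub>\<infinity>k. \<psi> (m, k)) = (\<Sum>\<^sub>\<infinity>k. (of_nat (Suc m) * z ^ m) * (a (Suc m, k) * w ^ k))"
      by (simp add: \<psi>_def dz_coeffs_def mult_ac)
    also have "\<dots> = (of_nat (Suc m) * z ^ m) * (\<Sum>\<^sub>\<infinity>k. a (Suc m, k) * w ^ k)"
      by (rule infsum_cmult_right')
    finally show ?thesis by (simp add: diffs_def)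
  qed
  from has_sum_rows[OF \<psi>]
  have "(\<lambda>m. diffs (\<lambda>m. \<Sum>\<^sub>\<infinity>k. a (m, k) * w ^ k) m * z ^ m) sums infsum \<psi> UNIV"
    unfolding row by (rule has_sum_imp_sums)
  then have "infsum \<psi> UNIV = dz f (z, w)"
    using dz_eq_row_series_deriv[OF assms z w] by (simp add: sums_iff)
  then show "((\<lambda>(m, k). dz_coeffs a (m, k) * z ^ m * w ^ k) has_sum dz f (z, w)) UNIV"
    using \<psi> by (simp add: \<psi>_def)
qed

lemma has_expansion_swap:
  assumes "has_expansion a f"
  shows "has_expansion (a \<circ> prod.swap) (f \<circ> prod.swap)"
  unfolding has_expansion_def
proof (intro allI impI)
  fix z w :: complex assume "norm z < 1 \<and> norm w < 1"
  then have "((\<lambda>(m, n). a (m, n) * w ^ m * z ^ n) has_sum f (w, z)) (UNIV \<times> UNIV)"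
    using assms unfolding has_expansion_def by simp
  then show "((\<lambda>(m, n). (a \<circ> prod.swap) (m, n) * z ^ m * w ^ n) has_sum (f \<circ> prod.swap) (z, w)) UNIV"
    by (subst (asm) has_sum_swap) (simp add: mult_ac)
qed

lemma has_expansion_dw:
  assumes "has_expansion a f"
  shows "has_expansion (dw_coeffs a) (dw f)"
proof -
  have "has_expansion (dz_coeffs (a \<circ> prod.swap) \<circ> prod.swap) (dz (f \<circ> prod.swap) \<circ> prod.swap)"
    by (intro has_expansion_swap has_expansion_dz assms)
  moreover have "dz_coeffs (a \<circ> prod.swap) \<circ> prod.swap = dw_coeffs a"
    by (simp add: fun_eq_iff dz_coeffs_def dw_coeffs_def)
  moreover have "dz (f \<circ> prod.swap) \<circ> prod.swap = dw f"
    by (simp add: fun_eq_iff dz_def dw_def)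
  ultimately show ?thesis by simp
qed

lemma has_expansion_dz_dw_iter:
  assumes "has_expansion a f"
  shows "has_expansion ((dz_coeffs ^^ i) ((dw_coeffs ^^ j) a)) ((dz ^^ i) ((dw ^^ j) f))"
proof -
  have "has_expansion ((dw_coeffs ^^ j) a) ((dw ^^ j) f)"
    by (induction j) (simp_all add: assms has_expansion_dw)
  then show ?thesis by (induction i) (simp_all add: has_expansion_dz)
qed

lemma fact_add_div_fact: "(fact (m + i) / fact m :: complex) = fact i * of_nat ((m + i) choose i)"
proof -
  have "(of_nat ((m + i) choose i) :: complex) = fact (m + i) / (fact i * fact m)"
    using binomial_fact[of i "m + i", where 'a = complex] by simp
  then show ?thesis by (simp add: field_simps)
qed

lemma dz_coeffs_iter: "(dz_coeffs ^^ i) a (m, k) = (fact (m + i) / fact m) * a (m + i, k)"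
proof (induction i arbitrary: m)
  case (Suc i)
  have "(dz_coeffs ^^ Suc i) a (m, k) = of_nat (Suc m) * ((dz_coeffs ^^ i) a (Suc m, k))"
    by (simp add: dz_coeffs_def)
  also have "\<dots> = (fact (m + Suc i) / fact m) * a (m + Suc i, k)"
    unfolding Suc.IH by (simp add: field_simps del: of_nat_Suc)
  finally show ?case .
qed simp

lemma dw_coeffs_iter: "(dw_coeffs ^^ j) a (m, k) = (fact (k + j) / fact k) * a (m, k + j)"
proof (induction j arbitrary: k)
  case (Suc j)
  have "(dw_coeffs ^^ Suc j) a (m, k) = of_nat (Suc k) * ((dw_coeffs ^^ j) a (m, Suc k))"
    by (simp add: dw_coeffs_def)
  also have "\<dots> = (fact (k + Suc j) / fact k) * a (m, k + Suc j)"
    unfolding Suc.IH by (simp add: field_simps del: of_nat_Suc)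
  finally show ?case .
qed simp

lemma antidiag_sum_dz_dw_iter:
  "(\<Sum>k\<le>N. antidiag ((dz_coeffs ^^ i) ((dw_coeffs ^^ j) a)) N k)
     = fact i * fact j * antidiag_mixed_moment a (N + i + j) i j"
proof -
  define D where "D = N + i + j"
  define g where "g k = antidiag a D k * of_nat ((D - k) choose i) * of_nat (k choose j)" for k
  have "(\<Sum>k\<le>N. antidiag ((dz_coeffs ^^ i) ((dw_coeffs ^^ j) a)) N k) = (\<Sum>k\<le>N. fact i * fact j * g (k + j))"
  proof (intro sum.cong refl)
    fix k assume "k \<in> {..N}"
    then have "D - (k + j) = N - k + i" by (simp add: D_def)
    then show "antidiag ((dz_coeffs ^^ i) ((dw_coeffs ^^ j) a)) N k = fact i * fact j * g (k + j)"
      unfolding antidiag_def dz_coeffs_iter dw_coeffs_iter fact_add_div_fact g_def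
      by (simp add: mult_ac)
  qed
  also have "\<dots> = fact i * fact j * (\<Sum>k\<in>{j..N + j}. g k)"
    unfolding sum_distrib_left[symmetric] atMost_atLeast0
    using sum.shift_bounds_cl_nat_ivl[of g 0 j N] by simp
  also have "(\<Sum>k\<in>{j..N + j}. g k) = (\<Sum>k\<le>D. g k)"
  proof (rule sum.mono_neutral_left)
    show "\<forall>k\<in>{..D} - {j..N + j}. g k = 0"
      by (auto simp: g_def D_def)
  qed (auto simp: D_def)
  finally show ?thesis by (simp add: D_def g_def antidiag_mixed_moment_def)
qed

lemma has_expansion_diagonal:
  assumes "has_expansion c g" and "norm z < 1"
  shows "((\<lambda>N. (\<Sum>k\<le>N. antidiag c N k) * z ^ N) has_sum g (z, z)) UNIV"
proof -
  have "((\<lambda>(m, k). c (m, k) * z ^ m * z ^ k) has_sum g (z, z)) UNIV"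
    using assms unfolding has_expansion_def by blast
  from has_sum_antidiag[OF this]
  have "((\<lambda>N. \<Sum>k\<le>N. c (N - k, k) * z ^ (N - k) * z ^ k) has_sum g (z, z)) UNIV"
    by simp
  moreover have "(\<Sum>k\<le>N. c (N - k, k) * z ^ (N - k) * z ^ k) = (\<Sum>k\<le>N. antidiag c N k) * z ^ N" for N
    unfolding sum_distrib_right
    by (intro sum.cong refl) (simp add: antidiag_def mult.assoc flip: power_add)
  ultimately show ?thesis by simp
qed

lemma diagonal_eq_0_iff:
  assumes "has_expansion c g"
  shows "(\<forall>z. norm z < 1 \<longrightarrow> g (z, z) = 0) \<longleftrightarrow> (\<forall>N. (\<Sum>k\<le>N. antidiag c N k) = 0)"
proof
  assume "\<forall>z. norm z < 1 \<longrightarrow> g (z, z) = 0"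
  then have "(\<lambda>N. \<Sum>k\<le>N. antidiag c N k) = (\<lambda>_. 0)"
    using has_expansion_diagonal[OF assms] by (intro powser_has_sum_0_imp_zero) auto
  then show "\<forall>N. (\<Sum>k\<le>N. antidiag c N k) = 0" by metis
next
  assume "\<forall>N. (\<Sum>k\<le>N. antidiag c N k) = 0"
  then have "((\<lambda>N::nat. 0) has_sum g (z, z)) UNIV" if "norm z < 1" for z
    using has_expansion_diagonal[OF assms that] by simp
  then show "\<forall>z. norm z < 1 \<longrightarrow> g (z, z) = 0"
    using has_sum_0_simp has_sum_unique by blast
qed

lemma vanishes_to_order_iff_antidiag_moments:
  assumes "has_expansion a f"
  shows "vanishes_to_order n f \<longleftrightarrow> antidiag_moments_vanish n a"
proof -
  have diagonal: "(\<forall>z. norm z < 1 \<longrightarrow> ((dz ^^ i) ((dw ^^ j) f)) (z, z) = 0) \<longleftrightarrow>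
      (\<forall>N. (\<Sum>k\<le>N. antidiag ((dz_coeffs ^^ i) ((dw_coeffs ^^ j) a)) N k) = 0)" for i j
    by (rule diagonal_eq_0_iff[OF has_expansion_dz_dw_iter[OF assms]])
  have shift: "(\<forall>N. antidiag_mixed_moment a (N + i + j) i j = 0) \<longleftrightarrow>
      (\<forall>D. antidiag_mixed_moment a D i j = 0)" for i j
  proof (intro iffI allI)
    fix D assume shifted: "\<forall>N. antidiag_mixed_moment a (N + i + j) i j = 0"
    show "antidiag_mixed_moment a D i j = 0"
    proof (cases "i + j \<le> D")
      case True
      then have "D = (D - (i + j)) + i + j" by simp
      then show ?thesis using shifted by metis
    qed (simp add: antidiag_mixed_moment_eq_0)
  qed simp
  have "vanishes_to_order n f \<longleftrightarrow>
     (\<forall>i j. i + j < n \<longrightarrow> (\<forall>N. (\<Sum>k\<le>N. antidiag ((dz_coeffs ^^ i) ((dw_coeffs ^^ j) a)) N k) = 0))"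
    unfolding vanishes_to_order_def by (simp only: diagonal)
  also have "\<dots> \<longleftrightarrow> (\<forall>i j. i + j < n \<longrightarrow> (\<forall>D. antidiag_mixed_moment a D i j = 0))"
    by (simp add: antidiag_sum_dz_dw_iter shift)
  also have "\<dots> \<longleftrightarrow> antidiag_moments_vanish n a"
    unfolding antidiag_mixed_moments_iff[symmetric] by blast
  finally show ?thesis .
qed

lemma bij_betw_swap_inner:
  "bij_betw (\<lambda>((l, t), k). ((l, k), t)) UNIV UNIV"
  by (rule bij_betw_byWitness[where f' = "\<lambda>((l, k), t). ((l, t), k)"]) auto

lemma sum_powers_le:
  fixes z w :: complex
  assumes "norm z \<le> \<rho>" and "norm w \<le> \<rho>"
  shows "(\<Sum>t\<le>N. norm z ^ t * norm w ^ (N - t)) \<le> of_nat (Suc N) * \<rho> ^ N"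
proof -
  have "0 \<le> \<rho>" using assms(1) norm_ge_zero[of z] by linarith
  have "norm z ^ t * norm w ^ (N - t) \<le> \<rho> ^ N" if "t \<le> N" for t
  proof -
    have "norm z ^ t * norm w ^ (N - t) \<le> \<rho> ^ t * \<rho> ^ (N - t)"
      using assms \<open>0 \<le> \<rho>\<close> by (intro mult_mono power_mono) auto
    also have "\<dots> = \<rho> ^ N" using that by (simp flip: power_add)
    finally show ?thesis .
  qed
  then have "(\<Sum>t\<le>N. norm z ^ t * norm w ^ (N - t)) \<le> (\<Sum>t\<le>N. \<rho> ^ N)"
    by (intro sum_mono) auto
  then show ?thesis by simp
qed

definition diff_quotient :: "(complex \<times> complex \<Rightarrow> complex) \<Rightarrow> complex \<times> complex \<Rightarrow> complex" where
  "diff_quotient f = (\<lambda>(z, w). if z = w then dz f (w, w) else (f (z, w) - f (w, w)) / (z - w))"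

definition diff_quotient_coeffs :: "(nat \<times> nat \<Rightarrow> complex) \<Rightarrow> nat \<times> nat \<Rightarrow> complex" where
  "diff_quotient_coeffs a = (\<lambda>(i, j). \<Sum>k\<le>j. antidiag a (Suc (i + j)) k)"

text \<open>Since \<open>(z^(N+1) - w^(N+1)) / (z - w) = \<Sum>t\<le>N. z^t w^(N-t)\<close>, the difference quotient is,
  row by row, a sum of the coefficients \<open>a (N + 1, k)\<close>; at \<open>z = w\<close> this is the series of
  \<open>dz f\<close>.\<close>
lemma diff_quotient_has_sum_rows:
  assumes f: "has_expansion a f" and z: "norm z < 1" and w: "norm w < 1"
  shows "((\<lambda>(N, k). a (Suc N, k) * w ^ k * (\<Sum>t\<le>N. z ^ t * w ^ (N - t))) has_sum diff_quotient f (z, w)) UNIV"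
proof (cases "z = w")
  case True
  have "((\<lambda>(N, k). dz_coeffs a (N, k) * w ^ N * w ^ k) has_sum dz f (w, w)) UNIV"
    using has_expansion_dz[OF f] w unfolding has_expansion_def by blast
  moreover have "(\<Sum>t\<le>N. w ^ t * w ^ (N - t)) = of_nat (Suc N) * w ^ N" for N
    by (simp flip: power_add)
  ultimately show ?thesis
    using True by (simp add: diff_quotient_def dz_coeffs_def case_prod_unfold mult_ac)
next
  case False
  have "((\<lambda>p. (\<lambda>(m, k). a (m, k) * z ^ m * w ^ k) p - (\<lambda>(m, k). a (m, k) * w ^ m * w ^ k) p)
          has_sum (f (z, w) - f (w, w))) UNIV"
    using f z w unfolding has_expansion_def by (intro has_sum_diff) auto
  then have "((\<lambda>(m, k). a (m, k) * w ^ k * ((z ^ m - w ^ m) / (z - w))) has_sum diff_quotient f (z, w)) UNIV"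
    using has_sum_divide_const[where c = "z - w"] False
    by (fastforce simp: diff_quotient_def case_prod_unfold algebra_simps diff_divide_distrib)
  moreover have "c * (z ^ Suc N - w ^ Suc N) / (z - w) = c * (\<Sum>t\<le>N. z ^ t * w ^ (N - t))" for c N
    using False unfolding diff_power_eq_sum lessThan_Suc_atMost by simp
  ultimately show ?thesis
    by (subst (asm) has_sum_Suc_fst_iff[symmetric]) (simp_all add: case_prod_unfold)
qed

text \<open>Both expansions of the difference quotient are regroupings of the absolutely summable
  family \<open>a (l + t + 1, k) z^t w^(l + k)\<close>: along \<open>l + t = N\<close> it gives the rows above, along
  \<open>l + k = j\<close> the coefficients \<open>diff_quotient_coeffs a (t, j)\<close>.\<close>
lemma has_expansion_diff_quotient:
  assumes f: "has_expansion a f"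
  shows "has_expansion (diff_quotient_coeffs a) (diff_quotient f)"
  unfolding has_expansion_def
proof (intro allI impI, elim conjE)
  fix z w :: complex assume z: "norm z < 1" and w: "norm w < 1"
  define \<rho> where "\<rho> = max (norm z) (norm w)"
  have \<rho>: "norm z \<le> \<rho>" "norm w \<le> \<rho>" "0 \<le> \<rho>" "\<rho> < 1"
    using z w by (auto simp: \<rho>_def le_max_iff_disj)
  define \<Phi> where "\<Phi> = (\<lambda>((l, t), k). a (Suc (l + t), k) * z ^ t * w ^ (l + k))"
  have \<Phi>_antidiag: "\<Phi> ((N - t, t), k) = a (Suc N, k) * w ^ k * (z ^ t * w ^ (N - t))" if "t \<le> N" for N t k
    using that by (simp add: \<Phi>_def power_add mult_ac)
  have majorant: "(\<lambda>(N, k). of_nat (Suc N) * (norm (a (Suc N, k)) * norm w ^ k) * \<rho> ^ N)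
               summable_on UNIV"
    using has_expansion_derivative_majorant[OF f w \<rho>(3,4)] .
  have "(\<Sum>t\<le>N. norm (\<Phi> ((N - t, t), k)))
          \<le> of_nat (Suc N) * (norm (a (Suc N, k)) * norm w ^ k) * \<rho> ^ N" for N k
  proof -
    have "(\<Sum>t\<le>N. norm (\<Phi> ((N - t, t), k)))
        = norm (a (Suc N, k)) * norm w ^ k * (\<Sum>t\<le>N. norm z ^ t * norm w ^ (N - t))"
      by (simp add: \<Phi>_antidiag sum_distrib_left norm_mult norm_power)
    also have "\<dots> \<le> norm (a (Suc N, k)) * norm w ^ k * (of_nat (Suc N) * \<rho> ^ N)"
      using \<rho> by (intro mult_left_mono sum_powers_le) auto
    finally show ?thesis by (simp add: mult_ac)
  qed
  then have "(\<lambda>(N, k). \<Sum>t\<le>N. norm (\<Phi> ((N - t, t), k))) summable_on UNIV"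
    by (intro summable_on_comparison_test[OF majorant]) (auto simp: case_prod_unfold intro: sum_nonneg)
  then have "(\<lambda>p. norm (\<Phi> p)) summable_on UNIV"
    by (intro summable_on_antidiag_paramI) auto
  then have "\<Phi> summable_on UNIV" by (rule abs_summable_summable)
  then have \<Phi>: "(\<Phi> has_sum infsum \<Phi> UNIV) UNIV" by (rule has_sum_infsum)
  have "((\<lambda>(N, k). a (Suc N, k) * w ^ k * (\<Sum>t\<le>N. z ^ t * w ^ (N - t))) has_sum infsum \<Phi> UNIV) UNIV"
    using has_sum_antidiag_param[OF \<Phi>] by (simp add: \<Phi>_antidiag sum_distrib_left case_prod_unfold)
  then have sum_eq: "infsum \<Phi> UNIV = diff_quotient f (z, w)"
    using diff_quotient_has_sum_rows[OF f z w] has_sum_unique by blast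
  have "((\<lambda>((l, k), t). \<Phi> ((l, t), k)) has_sum infsum \<Phi> UNIV) UNIV"
    using has_sum_reindex_bij_betw[OF bij_betw_swap_inner, where f = \<Phi>] \<Phi>
    by (simp add: case_prod_beta')
  from has_sum_antidiag_param[OF this]
  have "((\<lambda>(j, t). diff_quotient_coeffs a (t, j) * z ^ t * w ^ j) has_sum infsum \<Phi> UNIV) UNIV"
    by (simp add: \<Phi>_def diff_quotient_coeffs_def antidiag_def sum_distrib_right case_prod_unfold
        Suc_diff_le add.commute)
  then show "((\<lambda>(i, j). diff_quotient_coeffs a (i, j) * z ^ i * w ^ j) has_sum diff_quotient f (z, w)) UNIV"
    using has_sum_swap[where f = "\<lambda>(i, j). diff_quotient_coeffs a (i, j) * z ^ i * w ^ j"
        and A = UNIV and B = UNIV]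
    unfolding sum_eq by simp
qed

section \<open>Theta on the spaces V\<close>

lemma Theta_eq:
  "Theta L f = (\<lambda>p. of_real (theta_alpha L) * dw f p - of_real (theta_beta L) * diff_quotient f p)"
  by (simp add: fun_eq_iff Theta_def theta_alpha_def theta_beta_def diff_quotient_def)

lemma theta_coeffs_eq:
  "theta_coeffs L a
     = (\<lambda>p. of_real (theta_alpha L) * dw_coeffs a p - of_real (theta_beta L) * diff_quotient_coeffs a p)"
  by (simp add: fun_eq_iff theta_coeffs_def theta_slice_def dw_coeffs_def diff_quotient_coeffs_def
      antidiag_def)

lemma has_expansion_Theta:
  assumes "has_expansion a f"
  shows "has_expansion (theta_coeffs L a) (Theta L f)"
  unfolding has_expansion_def
proof (intro allI impI)
  fix z w :: complex assume zw: "norm z < 1 \<and> norm w < 1"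
  have "((\<lambda>(m, n). dw_coeffs a (m, n) * z ^ m * w ^ n) has_sum dw f (z, w)) UNIV"
    using has_expansion_dw[OF assms] zw unfolding has_expansion_def by blast
  then have D: "((\<lambda>p. of_real (theta_alpha L) * (\<lambda>(m, n). dw_coeffs a (m, n) * z ^ m * w ^ n) p)
                  has_sum of_real (theta_alpha L) * dw f (z, w)) UNIV"
    by (rule has_sum_cmult_right)
  have "((\<lambda>(m, n). diff_quotient_coeffs a (m, n) * z ^ m * w ^ n) has_sum diff_quotient f (z, w)) UNIV"
    using has_expansion_diff_quotient[OF assms] zw unfolding has_expansion_def by blast
  then have Q: "((\<lambda>p. of_real (theta_beta L) * (\<lambda>(m, n). diff_quotient_coeffs a (m, n) * z ^ m * w ^ n) p)
                  has_sum of_real (theta_beta L) * diff_quotient f (z, w)) UNIV"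
    by (rule has_sum_cmult_right)
  from has_sum_diff[OF D Q]
  show "((\<lambda>(m, n). theta_coeffs L a (m, n) * z ^ m * w ^ n) has_sum Theta L f (z, w)) UNIV"
    unfolding Theta_eq by (simp add: theta_coeffs_eq case_prod_unfold algebra_simps)
qed

lemma coeffs_Theta:
  assumes "L > 1" and "f \<in> Hsp (L - 1)"
  shows "coeffs (Theta L f) = theta_coeffs L (coeffs f)"
proof -
  have "has_expansion (coeffs f) f" using assms(2) unfolding Hsp_iff_coeffs by blast
  then show ?thesis by (rule coeffs_eqI[OF has_expansion_Theta])
qed

lemma Theta_in_Hsp:
  assumes "L > 1" and "f \<in> Hsp (L - 1)"
  shows "Theta L f \<in> Hsp (L + 1)"
proof -
  have f: "has_expansion (coeffs f) f" "wt_square_summable (L - 1) (coeffs f)"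
    using assms(2) unfolding Hsp_iff_coeffs by blast+
  show ?thesis
    unfolding Hsp_iff_coeffs coeffs_Theta[OF assms]
    using has_expansion_Theta[OF f(1)] theta_coeffs_square_summable[OF assms(1) f(2)] by blast
qed

lemma vanishes_to_order_iff_coeffs:
  assumes "f \<in> Hsp \<mu>"
  shows "vanishes_to_order n f \<longleftrightarrow> antidiag_moments_vanish n (coeffs f)"
  using assms vanishes_to_order_iff_antidiag_moments unfolding Hsp_iff_coeffs by blast

lemma vanishes_to_order_mono: "vanishes_to_order n f \<Longrightarrow> m \<le> n \<Longrightarrow> vanishes_to_order m f"
  by (simp add: vanishes_to_order_def)

lemma vanishes_to_order_Theta_iff:
  assumes "L > 1" and "n \<ge> 1" and "f \<in> Hsp (L - 1)"
  shows "vanishes_to_order n f \<longleftrightarrow> vanishes_to_order 1 f \<and> vanishes_to_order (n - 1) (Theta L f)"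
  unfolding vanishes_to_order_iff_coeffs[OF assms(3)]
    vanishes_to_order_iff_coeffs[OF Theta_in_Hsp[OF assms(1,3)]] coeffs_Theta[OF assms(1,3)]
  by (rule antidiag_moments_vanish_theta_coeffs_iff[OF assms(1,2)])

lemma inner_H_Theta:
  assumes L: "L > 1" and f: "f \<in> Hsp (L - 1)" and v: "v \<in> Hsp (L - 1)" and "vanishes_to_order 1 v"
  shows "inner_H (L + 1) (Theta L f) (Theta L v) = inner_H (L - 1) f v"
proof -
  have "antidiag_moments_vanish 1 (coeffs v)"
    using assms(4) vanishes_to_order_iff_coeffs[OF v] by blast
  moreover have "wt_square_summable (L - 1) (coeffs f)" "wt_square_summable (L - 1) (coeffs v)"
    using f v unfolding Hsp_iff_coeffs by blast+
  ultimately show ?thesis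
    unfolding inner_H_def coeffs_Theta[OF L f] coeffs_Theta[OF L v]
    by (rule infsum_theta_coeffs_inner[OF L, rotated 2])
qed

lemma Theta_preimage:
  assumes L: "L > 1" and g: "g \<in> Hsp (L + 1)"
  obtains v where "v \<in> Hsp (L - 1)" "coeffs (Theta L v) = coeffs g" "vanishes_to_order 1 v"
proof -
  obtain u where u: "theta_coeffs L u = coeffs g" "antidiag_moments_vanish 1 u"
    using exists_theta_coeffs_preimage[OF L] by blast
  moreover have "wt_square_summable (L + 1) (coeffs g)" using g unfolding Hsp_iff_coeffs by blast
  ultimately have "wt_square_summable (L - 1) u"
    using wt_square_summable_of_theta_coeffs[OF L] by simp
  define v where "v = (\<lambda>(z, w). \<Sum>\<^sub>\<infinity>(m, n). u (m, n) * z ^ m * w ^ n)"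
  have "has_expansion u v"
    unfolding v_def using L \<open>wt_square_summable (L - 1) u\<close>
    by (intro has_expansion_of_wt_square_summable) auto
  then have coeffs_v: "coeffs v = u" by (rule coeffs_eqI)
  have vH: "v \<in> Hsp (L - 1)"
    unfolding Hsp_iff_coeffs coeffs_v using \<open>has_expansion u v\<close> \<open>wt_square_summable (L - 1) u\<close>
    by blast
  show ?thesis
  proof (rule that[OF vH])
    show "coeffs (Theta L v) = coeffs g" unfolding coeffs_Theta[OF L vH] coeffs_v by (rule u(1))
    show "vanishes_to_order 1 v" unfolding vanishes_to_order_iff_coeffs[OF vH] coeffs_v by (rule u(2))
  qed
qed

lemma Theta_Vsp:
  assumes L: "L > 1" and n: "n \<ge> 1" and f: "f \<in> Vsp n (L - 1)"
  shows "Theta L f \<in> Vsp (n - 1) (L + 1)"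
  unfolding Vsp_def
proof (intro CollectI conjI ballI impI)
  have fH: "f \<in> Hsp (L - 1)" using f by (simp add: Vsp_def)
  then show "Theta L f \<in> Hsp (L + 1)" by (rule Theta_in_Hsp[OF L])
  fix g assume gH: "g \<in> Hsp (L + 1)" and g: "vanishes_to_order (n - 1) g"
  obtain v where vH: "v \<in> Hsp (L - 1)" and v: "coeffs (Theta L v) = coeffs g" "vanishes_to_order 1 v"
    using Theta_preimage[OF L gH] .
  have "vanishes_to_order (n - 1) (Theta L v)"
    using g v(1) vanishes_to_order_iff_coeffs[OF gH] vanishes_to_order_iff_coeffs[OF Theta_in_Hsp[OF L vH]]
    by simp
  then have "vanishes_to_order n v" using vanishes_to_order_Theta_iff[OF L n vH] v(2) by simp
  have "inner_H (L + 1) (Theta L f) g = inner_H (L + 1) (Theta L f) (Theta L v)"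
    using v(1) by (simp add: inner_H_def)
  also have "\<dots> = inner_H (L - 1) f v" by (rule inner_H_Theta[OF L fH vH v(2)])
  also have "\<dots> = 0" using f vH \<open>vanishes_to_order n v\<close> by (simp add: Vsp_def)
  finally show "inner_H (L + 1) (Theta L f) g = 0" .
qed

lemma Theta_Vperp:
  assumes L: "L > 1" and n: "n \<ge> 1" and h: "h \<in> Vperp n (L - 1)"
  shows "Theta L h \<in> Vperp (n - 1) (L + 1)"
  unfolding Vperp_def
proof (intro CollectI conjI ballI)
  have hH: "h \<in> Hsp (L - 1)" using h by (simp add: Vperp_def)
  then show "Theta L h \<in> Hsp (L + 1)" by (rule Theta_in_Hsp[OF L])
  fix g assume g: "g \<in> Vsp (n - 1) (L + 1)"
  then have gH: "g \<in> Hsp (L + 1)" by (simp add: Vsp_def)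
  obtain v where vH: "v \<in> Hsp (L - 1)" and v: "coeffs (Theta L v) = coeffs g" "vanishes_to_order 1 v"
    using Theta_preimage[OF L gH] .
  have "v \<in> Vsp n (L - 1)"
    unfolding Vsp_def
  proof (intro CollectI conjI ballI impI vH)
    fix u assume uH: "u \<in> Hsp (L - 1)" and u: "vanishes_to_order n u"
    have "inner_H (L - 1) v u = inner_H (L + 1) (Theta L v) (Theta L u)"
      using n u by (intro inner_H_Theta[symmetric] L vH uH) (auto elim: vanishes_to_order_mono)
    also have "\<dots> = inner_H (L + 1) g (Theta L u)"
      using v(1) by (simp add: inner_H_def)
    also have "\<dots> = 0"
      using g u vanishes_to_order_Theta_iff[OF L n uH] Theta_in_Hsp[OF L uH] by (simp add: Vsp_def)
    finally show "inner_H (L - 1) v u = 0" .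
  qed
  have "inner_H (L + 1) (Theta L h) g = inner_H (L + 1) (Theta L h) (Theta L v)"
    using v(1) by (simp add: inner_H_def)
  also have "\<dots> = inner_H (L - 1) h v" by (rule inner_H_Theta[OF L hH vH v(2)])
  also have "\<dots> = 0" using h \<open>v \<in> Vsp n (L - 1)\<close> by (simp add: Vperp_def)
  finally show "inner_H (L + 1) (Theta L h) g = 0" .
qed

theorem lemma6p4:
  fixes lam :: real and n :: nat
  assumes "lam > 1" and "n \<ge> 1"
  shows "(\<forall>f \<in> Vsp n (lam - 1). Theta lam f \<in> Vsp (n - 1) (lam + 1)) \<and>
         (\<forall>f \<in> Vperp n (lam - 1). Theta lam f \<in> Vperp (n - 1) (lam + 1))"
  using Theta_Vsp[OF assms] Theta_Vperp[OF assms] by blast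

end
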